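(* Let $I$ be a set with a non-trivial ultrafilter $\mathcal U$, $n\in\mathbb{N}$, $r>0$, and for each $i\in I$ let $E_i$ be an order continuous Banach lattice with a weak unit and $M_i$ an $(n,r)$-dispersed closed subspace of $E_i$. Then $(M_i)_{\mathcal U}$ is an $(n,r)$-dispersed subspace of $(E_i)_{\mathcal U}$.
   Context: A Banach lattice is order continuous if every net decreasing in order to $0$ converges in norm to $0$; $e\ge0$ is a weak unit if $|x|\wedge e=0$ implies $x=0$. Ultraproducts: $(X_i)_{\mathcal U}=\ell_\infty(I,X_i)/\{(x_i):\lim_{\mathcal U}\|x_i\|=0\}$, a Banach lattice when the $X_i$ are, with $[(x_i)]\le[(y_i)]$ iff there is $(z_i)$ with $\lim_{\mathcal U}\|z_i\|=0$ and $x_i+z_i\le y_i$ for all $i$; $(M_i)_{\mathcal U}$ is identified with the closed subspace $\{[(x_i)]: x_i\in M_i\}$ of $(E_i)_{\mathcal U}$. A closed subspace $M$ of a Banach lattice $F$ is $(n,r)$-dispersed if for every pairwise disjoint family $x_1,\dots,x_n$ of norm-one vectors of $F$ there is $i\in\{1,\dots,n\}$ with $\mathrm{dist}(x_i,M)\ge r$. *)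

theory Defs
  imports "HOL-Analysis.Analysis"
begin

definition is_ultrafilter :: "'i filter \<Rightarrow> bool" where
  "is_ultrafilter U \<longleftrightarrow> U \<noteq> bot \<and> (\<forall>P. eventually P U \<or> eventually (\<lambda>i. \<not> P i) U)"

text \<open>non-trivial = non-principal (free): contains no singleton\<close>
definition is_free_filter :: "'i filter \<Rightarrow> bool" where
  "is_free_filter U \<longleftrightarrow> (\<forall>i. \<not> eventually (\<lambda>j. j = i) U)"

record 'a blat =
  bl_carrier :: "'a set"
  bl_zero :: 'a
  bl_add :: "'a \<Rightarrow> 'a \<Rightarrow> 'a"
  bl_smult :: "real \<Rightarrow> 'a \<Rightarrow> 'a"
  bl_norm :: "'a \<Rightarrow> real"
  bl_le :: "'a \<Rightarrow> 'a \<Rightarrow> bool"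

definition bl_neg :: "'a blat \<Rightarrow> 'a \<Rightarrow> 'a" where
  "bl_neg E x = bl_smult E (-1) x"

definition bl_minus :: "'a blat \<Rightarrow> 'a \<Rightarrow> 'a \<Rightarrow> 'a" where
  "bl_minus E x y = bl_add E x (bl_neg E y)"

definition bl_vector_space :: "'a blat \<Rightarrow> bool" where
  "bl_vector_space E \<longleftrightarrow>
     bl_zero E \<in> bl_carrier E \<and>
     (\<forall>x\<in>bl_carrier E. \<forall>y\<in>bl_carrier E. bl_add E x y \<in> bl_carrier E) \<and>
     (\<forall>c. \<forall>x\<in>bl_carrier E. bl_smult E c x \<in> bl_carrier E) \<and>
     (\<forall>x\<in>bl_carrier E. \<forall>y\<in>bl_carrier E. \<forall>z\<in>bl_carrier E.
        bl_add E (bl_add E x y) z = bl_add E x (bl_add E y z)) \<and>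
     (\<forall>x\<in>bl_carrier E. \<forall>y\<in>bl_carrier E. bl_add E x y = bl_add E y x) \<and>
     (\<forall>x\<in>bl_carrier E. bl_add E x (bl_zero E) = x) \<and>
     (\<forall>x\<in>bl_carrier E. bl_add E x (bl_neg E x) = bl_zero E) \<and>
     (\<forall>x\<in>bl_carrier E. bl_smult E 1 x = x) \<and>
     (\<forall>a b. \<forall>x\<in>bl_carrier E. bl_smult E a (bl_smult E b x) = bl_smult E (a * b) x) \<and>
     (\<forall>a b. \<forall>x\<in>bl_carrier E. bl_smult E (a + b) x = bl_add E (bl_smult E a x) (bl_smult E b x)) \<and>
     (\<forall>a. \<forall>x\<in>bl_carrier E. \<forall>y\<in>bl_carrier E.
        bl_smult E a (bl_add E x y) = bl_add E (bl_smult E a x) (bl_smult E a y))"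

definition bl_normed :: "'a blat \<Rightarrow> bool" where
  "bl_normed E \<longleftrightarrow>
     (\<forall>x\<in>bl_carrier E. bl_norm E x \<ge> 0 \<and> (bl_norm E x = 0 \<longleftrightarrow> x = bl_zero E)) \<and>
     (\<forall>a. \<forall>x\<in>bl_carrier E. bl_norm E (bl_smult E a x) = \<bar>a\<bar> * bl_norm E x) \<and>
     (\<forall>x\<in>bl_carrier E. \<forall>y\<in>bl_carrier E. bl_norm E (bl_add E x y) \<le> bl_norm E x + bl_norm E y)"

definition bl_complete :: "'a blat \<Rightarrow> bool" where
  "bl_complete E \<longleftrightarrow>
     (\<forall>s::nat \<Rightarrow> 'a. (\<forall>k. s k \<in> bl_carrier E) \<and>
        (\<forall>e>0. \<exists>N. \<forall>m\<ge>N. \<forall>k\<ge>N. bl_norm E (bl_minus E (s m) (s k)) < e) \<longrightarrow>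
        (\<exists>x\<in>bl_carrier E. \<forall>e>0. \<exists>N. \<forall>k\<ge>N. bl_norm E (bl_minus E (s k) x) < e))"

definition bl_ordered :: "'a blat \<Rightarrow> bool" where
  "bl_ordered E \<longleftrightarrow>
     (\<forall>x y. bl_le E x y \<longrightarrow> x \<in> bl_carrier E \<and> y \<in> bl_carrier E) \<and>
     (\<forall>x\<in>bl_carrier E. bl_le E x x) \<and>
     (\<forall>x y. bl_le E x y \<and> bl_le E y x \<longrightarrow> x = y) \<and>
     (\<forall>x y z. bl_le E x y \<and> bl_le E y z \<longrightarrow> bl_le E x z) \<and>
     (\<forall>x y. \<forall>z\<in>bl_carrier E. bl_le E x y \<longrightarrow> bl_le E (bl_add E x z) (bl_add E y z)) \<and>
     (\<forall>x y. \<forall>c\<ge>0. bl_le E x y \<longrightarrow> bl_le E (bl_smult E c x) (bl_smult E c y))"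

definition bl_is_sup :: "'a blat \<Rightarrow> 'a \<Rightarrow> 'a \<Rightarrow> 'a \<Rightarrow> bool" where
  "bl_is_sup E x y z \<longleftrightarrow> z \<in> bl_carrier E \<and> bl_le E x z \<and> bl_le E y z \<and>
     (\<forall>w. bl_le E x w \<and> bl_le E y w \<longrightarrow> bl_le E z w)"

definition bl_is_inf :: "'a blat \<Rightarrow> 'a \<Rightarrow> 'a \<Rightarrow> 'a \<Rightarrow> bool" where
  "bl_is_inf E x y z \<longleftrightarrow> z \<in> bl_carrier E \<and> bl_le E z x \<and> bl_le E z y \<and>
     (\<forall>w. bl_le E w x \<and> bl_le E w y \<longrightarrow> bl_le E w z)"

definition bl_sup :: "'a blat \<Rightarrow> 'a \<Rightarrow> 'a \<Rightarrow> 'a" where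
  "bl_sup E x y = (THE z. bl_is_sup E x y z)"

definition bl_inf :: "'a blat \<Rightarrow> 'a \<Rightarrow> 'a \<Rightarrow> 'a" where
  "bl_inf E x y = (THE z. bl_is_inf E x y z)"

definition bl_abs :: "'a blat \<Rightarrow> 'a \<Rightarrow> 'a" where
  "bl_abs E x = bl_sup E x (bl_neg E x)"

definition bl_lattice :: "'a blat \<Rightarrow> bool" where
  "bl_lattice E \<longleftrightarrow> (\<forall>x\<in>bl_carrier E. \<forall>y\<in>bl_carrier E.
      (\<exists>z. bl_is_sup E x y z) \<and> (\<exists>z. bl_is_inf E x y z))"

definition banach_lattice :: "'a blat \<Rightarrow> bool" where
  "banach_lattice E \<longleftrightarrow> bl_vector_space E \<and> bl_normed E \<and> bl_complete E \<and>
     bl_ordered E \<and> bl_lattice E \<and>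
     (\<forall>x\<in>bl_carrier E. \<forall>y\<in>bl_carrier E.
        bl_le E (bl_abs E x) (bl_abs E y) \<longrightarrow> bl_norm E x \<le> bl_norm E y)"

text \<open>Order continuity: every net decreasing in order to 0 is norm null.  A decreasing net
  is represented by its (downward directed) range; the net is order-null iff the range has
  infimum 0, and norm-null iff the norms of its elements get arbitrarily small.\<close>
definition order_continuous :: "'a blat \<Rightarrow> bool" where
  "order_continuous E \<longleftrightarrow>
     (\<forall>D. D \<subseteq> bl_carrier E \<and> D \<noteq> {} \<and>
        (\<forall>a\<in>D. \<forall>b\<in>D. \<exists>c\<in>D. bl_le E c a \<and> bl_le E c b) \<and>
        (\<forall>d\<in>D. bl_le E (bl_zero E) d) \<and>
        (\<forall>w. (\<forall>d\<in>D. bl_le E w d) \<longrightarrow> bl_le E w (bl_zero E)) \<longrightarrow>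
        (\<forall>e>0. \<exists>d\<in>D. bl_norm E d < e))"

definition has_weak_unit :: "'a blat \<Rightarrow> bool" where
  "has_weak_unit E \<longleftrightarrow> (\<exists>e. bl_le E (bl_zero E) e \<and>
     (\<forall>x\<in>bl_carrier E. bl_inf E (bl_abs E x) e = bl_zero E \<longrightarrow> x = bl_zero E))"

definition bl_disjoint :: "'a blat \<Rightarrow> 'a \<Rightarrow> 'a \<Rightarrow> bool" where
  "bl_disjoint E x y \<longleftrightarrow> bl_inf E (bl_abs E x) (bl_abs E y) = bl_zero E"

definition closed_subspace :: "'a blat \<Rightarrow> 'a set \<Rightarrow> bool" where
  "closed_subspace E M \<longleftrightarrow> M \<subseteq> bl_carrier E \<and> bl_zero E \<in> M \<and>
     (\<forall>x\<in>M. \<forall>y\<in>M. bl_add E x y \<in> M) \<and> (\<forall>c. \<forall>x\<in>M. bl_smult E c x \<in> M) \<and>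
     (\<forall>s x. (\<forall>k::nat. s k \<in> M) \<and> x \<in> bl_carrier E \<and>
        (\<forall>e>0. \<exists>N. \<forall>k\<ge>N. bl_norm E (bl_minus E (s k) x) < e) \<longrightarrow> x \<in> M)"

definition bl_dist :: "'a blat \<Rightarrow> 'a \<Rightarrow> 'a set \<Rightarrow> real" where
  "bl_dist E x M = Inf ((\<lambda>m. bl_norm E (bl_minus E x m)) ` M)"

text \<open>(n,r)-dispersed closed subspace; the family x_1..x_n is indexed by {..<n}\<close>
definition dispersed :: "nat \<Rightarrow> real \<Rightarrow> 'a blat \<Rightarrow> 'a set \<Rightarrow> bool" where
  "dispersed n r F M \<longleftrightarrow> closed_subspace F M \<and>
     (\<forall>x::nat \<Rightarrow> 'a.
        (\<forall>k<n. x k \<in> bl_carrier F \<and> bl_norm F (x k) = 1) \<and>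
        (\<forall>k<n. \<forall>l<n. k \<noteq> l \<longrightarrow> bl_disjoint F (x k) (x l)) \<longrightarrow>
        (\<exists>k<n. bl_dist F (x k) M \<ge> r))"

definition up_linf :: "('i \<Rightarrow> 'a blat) \<Rightarrow> ('i \<Rightarrow> 'a) set" where
  "up_linf E = {x. (\<forall>i. x i \<in> bl_carrier (E i)) \<and> bdd_above (range (\<lambda>i. bl_norm (E i) (x i)))}"

definition up_null :: "('i \<Rightarrow> 'a blat) \<Rightarrow> 'i filter \<Rightarrow> ('i \<Rightarrow> 'a) set" where
  "up_null E U = {x \<in> up_linf E. ((\<lambda>i. bl_norm (E i) (x i)) \<longlongrightarrow> 0) U}"

definition up_class :: "('i \<Rightarrow> 'a blat) \<Rightarrow> 'i filter \<Rightarrow> ('i \<Rightarrow> 'a) \<Rightarrow> ('i \<Rightarrow> 'a) set" where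
  "up_class E U x = {y \<in> up_linf E. (\<lambda>i. bl_minus (E i) (x i) (y i)) \<in> up_null E U}"

definition up_rep :: "('i \<Rightarrow> 'a) set \<Rightarrow> 'i \<Rightarrow> 'a" where
  "up_rep X = (SOME x. x \<in> X)"

definition ultraproduct :: "('i \<Rightarrow> 'a blat) \<Rightarrow> 'i filter \<Rightarrow> ('i \<Rightarrow> 'a) set blat" where
  "ultraproduct E U =
     \<lparr> bl_carrier = up_class E U ` up_linf E,
       bl_zero = up_class E U (\<lambda>i. bl_zero (E i)),
       bl_add = (\<lambda>X Y. up_class E U (\<lambda>i. bl_add (E i) (up_rep X i) (up_rep Y i))),
       bl_smult = (\<lambda>c X. up_class E U (\<lambda>i. bl_smult (E i) c (up_rep X i))),
       bl_norm = (\<lambda>X. Lim U (\<lambda>i. bl_norm (E i) (up_rep X i))),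
       bl_le = (\<lambda>X Y. X \<in> up_class E U ` up_linf E \<and> Y \<in> up_class E U ` up_linf E \<and>
                  (\<exists>z\<in>up_null E U. \<forall>i.
                     bl_le (E i) (bl_add (E i) (up_rep X i) (z i)) (up_rep Y i))) \<rparr>"

text \<open>(M_i)_U identified with the subspace of classes of bounded families with x_i in M_i\<close>
definition ultraproduct_sub ::
  "('i \<Rightarrow> 'a blat) \<Rightarrow> 'i filter \<Rightarrow> ('i \<Rightarrow> 'a set) \<Rightarrow> ('i \<Rightarrow> 'a) set set" where
  "ultraproduct_sub E U M = up_class E U ` {x \<in> up_linf E. \<forall>i. x i \<in> M i}"

end

theory Submission
  imports Defs
begin

text \<open>Represent a disjoint family \<open>X\<^sub>1, \<dots>, X\<^sub>n\<close> of unit vectors of \<open>(E\<^sub>i)\<^sub>\<U>\<close> by bounded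
  families \<open>(x\<^sub>k\<^sub>,\<^sub>i)\<^sub>i\<close>. Disjointness in the ultraproduct only says that
  \<open>\<parallel>|x\<^sub>k\<^sub>,\<^sub>i| \<and> |x\<^sub>l\<^sub>,\<^sub>i|\<parallel> \<rightarrow> 0\<close> along \<open>\<U>\<close>. Removing from each \<open>x\<^sub>k\<^sub>,\<^sub>i\<close> its overlap with
  \<open>\<Sum>\<^sub>l\<^sub>\<noteq>\<^sub>k |x\<^sub>l\<^sub>,\<^sub>i|\<close> yields vectors that are disjoint in \<open>E\<^sub>i\<close> and differ from \<open>x\<^sub>k\<^sub>,\<^sub>i\<close> by at most
  the sum of these overlaps; normalised, they form, for \<open>\<U>\<close>-almost every \<open>i\<close>, a disjoint family of
  unit vectors \<open>z\<^sub>k\<^sub>,\<^sub>i\<close> with \<open>\<parallel>x\<^sub>k\<^sub>,\<^sub>i - z\<^sub>k\<^sub>,\<^sub>i\<parallel> \<rightarrow> 0\<close>. Dispersedness of \<open>M\<^sub>i\<close> gives, for each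
  such \<open>i\<close>, some \<open>k\<close> with \<open>dist(z\<^sub>k\<^sub>,\<^sub>i, M\<^sub>i) \<ge> r\<close>; as there are only \<open>n\<close> candidates, the
  ultrafilter settles on a single \<open>k\<close>, and since distances to \<open>(M\<^sub>i)\<^sub>\<U>\<close> are \<open>\<U>\<close>-limits of distances in the
  factors, \<open>dist(X\<^sub>k, (M\<^sub>i)\<^sub>\<U>) \<ge> r\<close>.\<close>

section \<open>Ultrafilter limits\<close>

lemma tendsto_zero_by_abs_bound:
  fixes f g :: "_ \<Rightarrow> real"
  assumes "\<And>i. \<bar>f i\<bar> \<le> g i" and "(g \<longlongrightarrow> 0) F"
  shows "(f \<longlongrightarrow> 0) F"
  using assms by (intro Lim_null_comparison[of f g]) (auto intro: always_eventually)

lemma ultrafilter_bounded_convergent: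
  assumes UF: "is_ultrafilter U" and bound: "\<And>i. \<bar>f i\<bar> \<le> (B::real)"
  shows "\<exists>l. (f \<longlongrightarrow> l) U"
proof -
  let ?F = "filtermap f U"
  have Fb: "?F \<noteq> bot" using UF by (simp add: filtermap_bot_iff is_ultrafilter_def)
  have "\<forall>i. f i \<in> {-B..B}" using bound by (metis abs_le_iff atLeastAtMost_iff minus_le_iff)
  hence "eventually (\<lambda>x. x \<in> {-B..B}) ?F" by (simp add: eventually_filtermap always_eventually)
  then obtain l where l: "inf (nhds l) ?F \<noteq> bot"
    using compact_filter[THEN iffD1, OF compact_Icc] Fb by blast
  have "(f \<longlongrightarrow> l) U"
  proof (rule topological_tendstoI)
    fix S assume S: "open S" "l \<in> S"
    show "eventually (\<lambda>i. f i \<in> S) U"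
    proof (rule ccontr)
      assume "\<not> eventually (\<lambda>i. f i \<in> S) U"
      hence "eventually (\<lambda>i. \<not> f i \<in> S) U" using UF unfolding is_ultrafilter_def by blast
      hence e1: "eventually (\<lambda>x. x \<notin> S) ?F" by (simp add: eventually_filtermap)
      have e2: "eventually (\<lambda>x. x \<in> S) (nhds l)" using S by (rule eventually_nhds_in_open)
      have "eventually (\<lambda>x. False) (inf (nhds l) ?F)"
        unfolding eventually_inf using e1 e2 by blast
      thus False using l by (simp add: eventually_False)
    qed
  qed
  thus ?thesis by blast
qed

lemma ultrafilter_ex_finite:
  assumes UF: "is_ultrafilter U" and ev: "eventually (\<lambda>i. \<exists>k<(n::nat). P k i) U"
  shows "\<exists>k<n. eventually (P k) U"
proof (rule ccontr)
  assume "\<not> ?thesis"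
  hence "\<forall>k\<in>{..<n}. eventually (\<lambda>i. \<not> P k i) U" using UF unfolding is_ultrafilter_def by auto
  hence "eventually (\<lambda>i. \<forall>k\<in>{..<n}. \<not> P k i) U" by (intro eventually_ball_finite) auto
  with ev have "eventually (\<lambda>i. False) U" by (rule eventually_elim2) auto
  thus False using UF by (simp add: is_ultrafilter_def eventually_False)
qed

section \<open>Banach lattices on a carrier set\<close>

lemma closed_subspace_subset: "closed_subspace E M \<Longrightarrow> M \<subseteq> bl_carrier E"
  unfolding closed_subspace_def by blast
lemma closed_subspace_zero: "closed_subspace E M \<Longrightarrow> bl_zero E \<in> M"
  unfolding closed_subspace_def by blast
lemma closed_subspace_add: "closed_subspace E M \<Longrightarrow> x \<in> M \<Longrightarrow> y \<in> M \<Longrightarrow> bl_add E x y \<in> M"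
  unfolding closed_subspace_def by blast
lemma closed_subspace_scale: "closed_subspace E M \<Longrightarrow> x \<in> M \<Longrightarrow> bl_smult E c x \<in> M"
  unfolding closed_subspace_def by blast
lemma closed_subspace_limit:
  "closed_subspace E M \<Longrightarrow> (\<And>k::nat. s k \<in> M) \<Longrightarrow> x \<in> bl_carrier E \<Longrightarrow>
   (\<And>e. e > 0 \<Longrightarrow> \<exists>K. \<forall>k\<ge>K. bl_norm E (bl_minus E (s k) x) < e) \<Longrightarrow> x \<in> M"
  unfolding closed_subspace_def by blast

fun bl_sum :: "'a blat \<Rightarrow> (nat \<Rightarrow> 'a) \<Rightarrow> nat \<Rightarrow> 'a" where
  "bl_sum E f 0 = bl_zero E"
| "bl_sum E f (Suc m) = bl_add E (bl_sum E f m) (f m)"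

locale blat_vector_space =
  fixes E :: "'a blat"
  assumes vector_space: "bl_vector_space E"
begin

abbreviation carrier where "carrier \<equiv> bl_carrier E"
abbreviation vzero ("\<zero>") where "\<zero> \<equiv> bl_zero E"
abbreviation vadd (infixl "\<oplus>" 65) where "x \<oplus> y \<equiv> bl_add E x y"
abbreviation vsub (infixl "\<ominus>" 65) where "x \<ominus> y \<equiv> bl_minus E x y"
abbreviation vscale (infixr "\<odot>" 75) where "c \<odot> x \<equiv> bl_smult E c x"
abbreviation neg where "neg x \<equiv> bl_neg E x"

lemma zero_closed[simp]: "\<zero> \<in> carrier"
  using vector_space unfolding bl_vector_space_def by simp
lemma add_closed[simp]: "x \<in> carrier \<Longrightarrow> y \<in> carrier \<Longrightarrow> x \<oplus> y \<in> carrier"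
  using vector_space unfolding bl_vector_space_def by simp
lemma scale_closed[simp]: "x \<in> carrier \<Longrightarrow> c \<odot> x \<in> carrier"
  using vector_space unfolding bl_vector_space_def by simp
lemma neg_closed[simp]: "x \<in> carrier \<Longrightarrow> neg x \<in> carrier"
  unfolding bl_neg_def by simp
lemma sub_closed[simp]: "x \<in> carrier \<Longrightarrow> y \<in> carrier \<Longrightarrow> x \<ominus> y \<in> carrier"
  unfolding bl_minus_def by simp

lemma add_assoc: "x \<in> carrier \<Longrightarrow> y \<in> carrier \<Longrightarrow> z \<in> carrier \<Longrightarrow> x \<oplus> y \<oplus> z = x \<oplus> (y \<oplus> z)"
  using vector_space unfolding bl_vector_space_def by blast
lemma add_commute: "x \<in> carrier \<Longrightarrow> y \<in> carrier \<Longrightarrow> x \<oplus> y = y \<oplus> x"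
  using vector_space unfolding bl_vector_space_def by blast
lemma add_left_commute:
  "x \<in> carrier \<Longrightarrow> y \<in> carrier \<Longrightarrow> z \<in> carrier \<Longrightarrow> x \<oplus> (y \<oplus> z) = y \<oplus> (x \<oplus> z)"
  by (metis add_assoc add_commute)
lemma add_0_right[simp]: "x \<in> carrier \<Longrightarrow> x \<oplus> \<zero> = x"
  using vector_space unfolding bl_vector_space_def by simp
lemma add_0_left[simp]: "x \<in> carrier \<Longrightarrow> \<zero> \<oplus> x = x"
  using add_commute add_0_right zero_closed by metis
lemma add_neg_self[simp]: "x \<in> carrier \<Longrightarrow> x \<oplus> neg x = \<zero>"
  using vector_space unfolding bl_vector_space_def by simp
lemma neg_add_self[simp]: "x \<in> carrier \<Longrightarrow> neg x \<oplus> x = \<zero>"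
  using add_commute add_neg_self neg_closed by metis
lemma scale_one[simp]: "x \<in> carrier \<Longrightarrow> 1 \<odot> x = x"
  using vector_space unfolding bl_vector_space_def by simp
lemma scale_scale[simp]: "x \<in> carrier \<Longrightarrow> a \<odot> b \<odot> x = (a * b) \<odot> x"
  using vector_space unfolding bl_vector_space_def by simp
lemma scale_left_distrib: "x \<in> carrier \<Longrightarrow> (a + b) \<odot> x = a \<odot> x \<oplus> b \<odot> x"
  using vector_space unfolding bl_vector_space_def by simp
lemma scale_right_distrib: "x \<in> carrier \<Longrightarrow> y \<in> carrier \<Longrightarrow> a \<odot> (x \<oplus> y) = a \<odot> x \<oplus> a \<odot> y"
  using vector_space unfolding bl_vector_space_def by simp

lemma add_neg_cancel_left[simp]: "x \<in> carrier \<Longrightarrow> y \<in> carrier \<Longrightarrow> x \<oplus> (neg x \<oplus> y) = y"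
  by (simp flip: add_assoc)
lemma neg_add_cancel_left[simp]: "x \<in> carrier \<Longrightarrow> y \<in> carrier \<Longrightarrow> neg x \<oplus> (x \<oplus> y) = y"
  by (simp flip: add_assoc)
lemma add_left_imp_eq: "x \<in> carrier \<Longrightarrow> y \<in> carrier \<Longrightarrow> z \<in> carrier \<Longrightarrow> x \<oplus> y = x \<oplus> z \<Longrightarrow> y = z"
  by (metis neg_add_cancel_left)

lemma scale_zero_left[simp]:
  assumes "x \<in> carrier" shows "0 \<odot> x = \<zero>"
proof (rule add_left_imp_eq)
  show "0 \<odot> x \<oplus> 0 \<odot> x = 0 \<odot> x \<oplus> \<zero>"
    using scale_left_distrib[OF assms, of 0 0] assms by simp
qed (use assms in simp_all)
lemma scale_zero_right[simp]: "c \<odot> \<zero> = \<zero>"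
  by (metis scale_zero_left scale_scale zero_closed mult_zero_right)
lemma neg_neg[simp]: "x \<in> carrier \<Longrightarrow> neg (neg x) = x"
  unfolding bl_neg_def by simp
lemma neg_zero[simp]: "neg \<zero> = \<zero>"
  unfolding bl_neg_def by simp
lemma neg_add: "x \<in> carrier \<Longrightarrow> y \<in> carrier \<Longrightarrow> neg (x \<oplus> y) = neg x \<oplus> neg y"
  unfolding bl_neg_def by (simp add: scale_right_distrib)
lemma scale_neg: "x \<in> carrier \<Longrightarrow> c \<odot> neg x = neg (c \<odot> x)"
  unfolding bl_neg_def by (simp add: mult.commute)
lemma sub_eq_add_neg: "x \<ominus> y = x \<oplus> neg y"
  by (simp add: bl_minus_def)

lemma add_sub_cancel: "x \<in> carrier \<Longrightarrow> y \<in> carrier \<Longrightarrow> y \<oplus> (x \<ominus> y) = x"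
  by (simp add: sub_eq_add_neg add_left_commute)

lemmas vector_algebra_simps = sub_eq_add_neg neg_add add_assoc add_commute add_left_commute

end

locale blat_banach_lattice = blat_vector_space E for E :: "'a blat" +
  assumes banach: "banach_lattice E"
begin

abbreviation vle (infix "\<preceq>" 50) where "x \<preceq> y \<equiv> bl_le E x y"
abbreviation lnorm ("\<parallel>_\<parallel>") where "\<parallel>x\<parallel> \<equiv> bl_norm E x"
abbreviation lsup (infixl "\<curlyvee>" 65) where "x \<curlyvee> y \<equiv> bl_sup E x y"
abbreviation linf (infixl "\<curlywedge>" 70) where "x \<curlywedge> y \<equiv> bl_inf E x y"
abbreviation labs where "labs x \<equiv> bl_abs E x"

lemma ordered: "bl_ordered E" using banach unfolding banach_lattice_def by blast
lemma normed: "bl_normed E" using banach unfolding banach_lattice_def by blast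
lemma lattice: "bl_lattice E" using banach unfolding banach_lattice_def by blast
lemma norm_mono_labs: "x \<in> carrier \<Longrightarrow> y \<in> carrier \<Longrightarrow> labs x \<preceq> labs y \<Longrightarrow> \<parallel>x\<parallel> \<le> \<parallel>y\<parallel>"
  using banach unfolding banach_lattice_def by blast

lemma le_carrier: "x \<preceq> y \<Longrightarrow> x \<in> carrier" "x \<preceq> y \<Longrightarrow> y \<in> carrier"
  using ordered unfolding bl_ordered_def by blast+
lemma le_refl[simp]: "x \<in> carrier \<Longrightarrow> x \<preceq> x" using ordered unfolding bl_ordered_def by blast
lemma le_antisym: "x \<preceq> y \<Longrightarrow> y \<preceq> x \<Longrightarrow> x = y" using ordered unfolding bl_ordered_def by blast
lemma le_trans[trans]: "x \<preceq> y \<Longrightarrow> y \<preceq> z \<Longrightarrow> x \<preceq> z" using ordered unfolding bl_ordered_def by blast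
lemma add_right_mono: "x \<preceq> y \<Longrightarrow> z \<in> carrier \<Longrightarrow> x \<oplus> z \<preceq> y \<oplus> z" using ordered unfolding bl_ordered_def by blast
lemma scale_mono: "x \<preceq> y \<Longrightarrow> c \<ge> 0 \<Longrightarrow> c \<odot> x \<preceq> c \<odot> y" using ordered unfolding bl_ordered_def by blast
lemma add_left_mono: "x \<preceq> y \<Longrightarrow> z \<in> carrier \<Longrightarrow> z \<oplus> x \<preceq> z \<oplus> y"
  by (metis add_right_mono le_carrier add_commute)
lemma add_mono: "x \<preceq> y \<Longrightarrow> u \<preceq> v \<Longrightarrow> x \<oplus> u \<preceq> y \<oplus> v"
  by (meson add_right_mono add_left_mono le_carrier le_trans)
lemma neg_le_neg: "x \<preceq> y \<Longrightarrow> neg y \<preceq> neg x"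
proof -
  assume h: "x \<preceq> y"
  have x: "x \<in> carrier" and y: "y \<in> carrier" using h le_carrier by auto
  have "x \<oplus> (neg x \<oplus> neg y) \<preceq> y \<oplus> (neg x \<oplus> neg y)" using add_left_mono[OF h, of "neg x \<oplus> neg y"] x y
    by (metis add_closed neg_closed add_commute)
  moreover have "x \<oplus> (neg x \<oplus> neg y) = neg y" using x y by simp
  moreover have "y \<oplus> (neg x \<oplus> neg y) = neg x" using x y add_left_commute[of y "neg x" "neg y"] by simp
  ultimately show ?thesis by simp
qed
lemma sub_right_mono: "x \<preceq> y \<Longrightarrow> z \<in> carrier \<Longrightarrow> x \<ominus> z \<preceq> y \<ominus> z"
  by (simp add: sub_eq_add_neg add_right_mono)
lemma sub_left_antimono: "x \<preceq> y \<Longrightarrow> z \<in> carrier \<Longrightarrow> z \<ominus> y \<preceq> z \<ominus> x"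
  by (simp add: sub_eq_add_neg add_left_mono neg_le_neg)
lemma le_add_nonneg_right: "\<zero> \<preceq> a \<Longrightarrow> x \<in> carrier \<Longrightarrow> x \<preceq> x \<oplus> a"
  using add_left_mono[of "\<zero>" a x] by simp
lemma le_add_nonneg_left: "\<zero> \<preceq> a \<Longrightarrow> x \<in> carrier \<Longrightarrow> x \<preceq> a \<oplus> x"
  by (metis le_add_nonneg_right add_commute le_carrier)
lemma neg_le_zero: "\<zero> \<preceq> a \<Longrightarrow> neg a \<preceq> \<zero>"
  using neg_le_neg by fastforce
lemma sub_nonneg_le: "\<zero> \<preceq> a \<Longrightarrow> x \<in> carrier \<Longrightarrow> x \<ominus> a \<preceq> x"
  using add_left_mono[OF neg_le_zero, of a x] by (simp add: sub_eq_add_neg)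

lemma sup_unique: "bl_is_sup E x y z1 \<Longrightarrow> bl_is_sup E x y z2 \<Longrightarrow> z1 = z2"
  unfolding bl_is_sup_def by (metis le_antisym)
lemma inf_unique: "bl_is_inf E x y z1 \<Longrightarrow> bl_is_inf E x y z2 \<Longrightarrow> z1 = z2"
  unfolding bl_is_inf_def by (metis le_antisym)
lemma is_sup_sup: "x \<in> carrier \<Longrightarrow> y \<in> carrier \<Longrightarrow> bl_is_sup E x y (x \<curlyvee> y)"
proof -
  assume "x \<in> carrier" "y \<in> carrier"
  then obtain z where z: "bl_is_sup E x y z" using lattice unfolding bl_lattice_def by blast
  show ?thesis unfolding bl_sup_def by (rule theI[of _ z]) (use z sup_unique in auto)
qed
lemma is_inf_inf: "x \<in> carrier \<Longrightarrow> y \<in> carrier \<Longrightarrow> bl_is_inf E x y (x \<curlywedge> y)"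
proof -
  assume "x \<in> carrier" "y \<in> carrier"
  then obtain z where z: "bl_is_inf E x y z" using lattice unfolding bl_lattice_def by blast
  show ?thesis unfolding bl_inf_def by (rule theI[of _ z]) (use z inf_unique in auto)
qed
lemma sup_closed[simp]: "x \<in> carrier \<Longrightarrow> y \<in> carrier \<Longrightarrow> x \<curlyvee> y \<in> carrier"
  using is_sup_sup[of x y] by (auto simp: bl_is_sup_def)
lemma inf_closed[simp]: "x \<in> carrier \<Longrightarrow> y \<in> carrier \<Longrightarrow> x \<curlywedge> y \<in> carrier"
  using is_inf_inf[of x y] by (auto simp: bl_is_inf_def)
lemma sup_ge1: "x \<in> carrier \<Longrightarrow> y \<in> carrier \<Longrightarrow> x \<preceq> x \<curlyvee> y"
  using is_sup_sup[of x y] by (auto simp: bl_is_sup_def)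
lemma sup_ge2: "x \<in> carrier \<Longrightarrow> y \<in> carrier \<Longrightarrow> y \<preceq> x \<curlyvee> y"
  using is_sup_sup[of x y] by (auto simp: bl_is_sup_def)
lemma sup_least: "x \<preceq> w \<Longrightarrow> y \<preceq> w \<Longrightarrow> x \<curlyvee> y \<preceq> w"
proof -
  assume a: "x \<preceq> w" "y \<preceq> w"
  have "bl_is_sup E x y (x \<curlyvee> y)" using is_sup_sup le_carrier a by blast
  thus ?thesis using a unfolding bl_is_sup_def by blast
qed
lemma inf_le1: "x \<in> carrier \<Longrightarrow> y \<in> carrier \<Longrightarrow> x \<curlywedge> y \<preceq> x"
  using is_inf_inf[of x y] by (auto simp: bl_is_inf_def)
lemma inf_le2: "x \<in> carrier \<Longrightarrow> y \<in> carrier \<Longrightarrow> x \<curlywedge> y \<preceq> y"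
  using is_inf_inf[of x y] by (auto simp: bl_is_inf_def)
lemma inf_greatest: "w \<preceq> x \<Longrightarrow> w \<preceq> y \<Longrightarrow> w \<preceq> x \<curlywedge> y"
proof -
  assume a: "w \<preceq> x" "w \<preceq> y"
  have "bl_is_inf E x y (x \<curlywedge> y)" using is_inf_inf le_carrier a by blast
  thus ?thesis using a unfolding bl_is_inf_def by blast
qed
lemma sup_eqI: "z \<in> carrier \<Longrightarrow> x \<preceq> z \<Longrightarrow> y \<preceq> z \<Longrightarrow> (\<And>w. x \<preceq> w \<Longrightarrow> y \<preceq> w \<Longrightarrow> z \<preceq> w) \<Longrightarrow> x \<curlyvee> y = z"
proof -
  assume a: "z \<in> carrier" "x \<preceq> z" "y \<preceq> z" and h: "\<And>w. x \<preceq> w \<Longrightarrow> y \<preceq> w \<Longrightarrow> z \<preceq> w"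
  have x: "x \<in> carrier" and y: "y \<in> carrier" using a le_carrier by auto
  show ?thesis by (rule le_antisym[OF sup_least[OF a(2,3)] h[OF sup_ge1[OF x y] sup_ge2[OF x y]]])
qed
lemma inf_eqI: "z \<in> carrier \<Longrightarrow> z \<preceq> x \<Longrightarrow> z \<preceq> y \<Longrightarrow> (\<And>w. w \<preceq> x \<Longrightarrow> w \<preceq> y \<Longrightarrow> w \<preceq> z) \<Longrightarrow> x \<curlywedge> y = z"
proof -
  assume a: "z \<in> carrier" "z \<preceq> x" "z \<preceq> y" and h: "\<And>w. w \<preceq> x \<Longrightarrow> w \<preceq> y \<Longrightarrow> w \<preceq> z"
  have x: "x \<in> carrier" and y: "y \<in> carrier" using a le_carrier by auto
  show ?thesis by (rule le_antisym[OF h[OF inf_le1[OF x y] inf_le2[OF x y]] inf_greatest[OF a(2,3)]])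
qed
lemma sup_comm: "x \<in> carrier \<Longrightarrow> y \<in> carrier \<Longrightarrow> x \<curlyvee> y = y \<curlyvee> x"
  by (rule sup_eqI) (auto intro: sup_ge1 sup_ge2 sup_least)
lemma inf_comm: "x \<in> carrier \<Longrightarrow> y \<in> carrier \<Longrightarrow> x \<curlywedge> y = y \<curlywedge> x"
  by (rule inf_eqI) (auto intro: inf_le1 inf_le2 inf_greatest)
lemma sup_mono: "x \<preceq> x' \<Longrightarrow> y \<preceq> y' \<Longrightarrow> x \<curlyvee> y \<preceq> x' \<curlyvee> y'"
proof -
  assume a: "x \<preceq> x'" "y \<preceq> y'"
  have "x' \<in> carrier" "y' \<in> carrier" using a le_carrier by auto
  hence "x' \<preceq> x' \<curlyvee> y'" "y' \<preceq> x' \<curlyvee> y'" by (auto intro: sup_ge1 sup_ge2)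
  thus ?thesis using a by (intro sup_least) (erule le_trans, assumption)+
qed
lemma inf_mono: "x \<preceq> x' \<Longrightarrow> y \<preceq> y' \<Longrightarrow> x \<curlywedge> y \<preceq> x' \<curlywedge> y'"
proof -
  assume a: "x \<preceq> x'" "y \<preceq> y'"
  have "x \<in> carrier" "y \<in> carrier" using a le_carrier by auto
  hence "x \<curlywedge> y \<preceq> x" "x \<curlywedge> y \<preceq> y" by (auto intro: inf_le1 inf_le2)
  thus ?thesis using a by (intro inf_greatest) (erule le_trans, assumption)+
qed

lemma add_sup_distrib: "x \<in> carrier \<Longrightarrow> y \<in> carrier \<Longrightarrow> c \<in> carrier \<Longrightarrow> c \<oplus> (x \<curlyvee> y) = (c \<oplus> x) \<curlyvee> (c \<oplus> y)"
proof -
  assume x: "x \<in> carrier" and y: "y \<in> carrier" and c: "c \<in> carrier"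
  show ?thesis
  proof (rule sym, rule sup_eqI)
    show "c \<oplus> x \<preceq> c \<oplus> (x \<curlyvee> y)" "c \<oplus> y \<preceq> c \<oplus> (x \<curlyvee> y)"
      using x y c by (auto intro!: add_left_mono sup_ge1 sup_ge2)
    fix w assume a: "c \<oplus> x \<preceq> w" "c \<oplus> y \<preceq> w"
    have "neg c \<oplus> (c \<oplus> x) \<preceq> neg c \<oplus> w" "neg c \<oplus> (c \<oplus> y) \<preceq> neg c \<oplus> w"
      using a c by (auto intro!: add_left_mono)
    hence "x \<curlyvee> y \<preceq> neg c \<oplus> w" using x y c by (auto intro!: sup_least)
    hence "c \<oplus> (x \<curlyvee> y) \<preceq> c \<oplus> (neg c \<oplus> w)" using c add_left_mono by blast
    moreover have "w \<in> carrier" using a le_carrier by blast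
    ultimately show "c \<oplus> (x \<curlyvee> y) \<preceq> w" using c by simp
  qed (use x y c in simp)
qed
lemma add_inf_distrib: "x \<in> carrier \<Longrightarrow> y \<in> carrier \<Longrightarrow> c \<in> carrier \<Longrightarrow> c \<oplus> (x \<curlywedge> y) = (c \<oplus> x) \<curlywedge> (c \<oplus> y)"
proof -
  assume x: "x \<in> carrier" and y: "y \<in> carrier" and c: "c \<in> carrier"
  show ?thesis
  proof (rule sym, rule inf_eqI)
    show "c \<oplus> x \<curlywedge> y \<preceq> c \<oplus> x" "c \<oplus> x \<curlywedge> y \<preceq> c \<oplus> y"
      using x y c by (auto intro!: add_left_mono inf_le1 inf_le2)
    fix w assume a: "w \<preceq> c \<oplus> x" "w \<preceq> c \<oplus> y"
    have "neg c \<oplus> w \<preceq> neg c \<oplus> (c \<oplus> x)" "neg c \<oplus> w \<preceq> neg c \<oplus> (c \<oplus> y)"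
      using a c by (auto intro!: add_left_mono)
    hence "neg c \<oplus> w \<preceq> x \<curlywedge> y" using x y c by (auto intro!: inf_greatest)
    hence "c \<oplus> (neg c \<oplus> w) \<preceq> c \<oplus> x \<curlywedge> y" using c add_left_mono by blast
    moreover have "w \<in> carrier" using a le_carrier by blast
    ultimately show "w \<preceq> c \<oplus> x \<curlywedge> y" using c by simp
  qed (use x y c in simp)
qed
lemma neg_sup: "x \<in> carrier \<Longrightarrow> y \<in> carrier \<Longrightarrow> neg (x \<curlyvee> y) = neg x \<curlywedge> neg y"
proof -
  assume x: "x \<in> carrier" and y: "y \<in> carrier"
  show ?thesis
  proof (rule sym, rule inf_eqI)
    show "neg (x \<curlyvee> y) \<preceq> neg x" "neg (x \<curlyvee> y) \<preceq> neg y"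
      using x y by (auto intro!: neg_le_neg sup_ge1 sup_ge2)
    fix w assume a: "w \<preceq> neg x" "w \<preceq> neg y"
    hence "x \<preceq> neg w" "y \<preceq> neg w" using neg_le_neg x y by fastforce+
    hence "x \<curlyvee> y \<preceq> neg w" by (rule sup_least)
    thus "w \<preceq> neg (x \<curlyvee> y)" using neg_le_neg a le_carrier by fastforce
  qed (use x y in simp)
qed
lemma neg_inf: "x \<in> carrier \<Longrightarrow> y \<in> carrier \<Longrightarrow> neg (x \<curlywedge> y) = neg x \<curlyvee> neg y"
  by (metis neg_sup neg_closed neg_neg sup_closed)

lemma sup_scale: "c > 0 \<Longrightarrow> x \<in> carrier \<Longrightarrow> y \<in> carrier \<Longrightarrow> c \<odot> (x \<curlyvee> y) = c \<odot> x \<curlyvee> c \<odot> y"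
proof -
  assume c: "c > 0" and x: "x \<in> carrier" and y: "y \<in> carrier"
  show ?thesis
  proof (rule sym, rule sup_eqI)
    show "c \<odot> x \<preceq> c \<odot> (x \<curlyvee> y)" "c \<odot> y \<preceq> c \<odot> (x \<curlyvee> y)"
      using x y c by (auto intro!: scale_mono sup_ge1 sup_ge2)
    fix w assume a: "c \<odot> x \<preceq> w" "c \<odot> y \<preceq> w"
    have "(1/c) \<odot> c \<odot> x \<preceq> (1/c) \<odot> w" "(1/c) \<odot> c \<odot> y \<preceq> (1/c) \<odot> w"
      using a c by (auto intro!: scale_mono)
    hence "x \<curlyvee> y \<preceq> (1/c) \<odot> w" using x y c by (auto intro!: sup_least)
    hence "c \<odot> (x \<curlyvee> y) \<preceq> c \<odot> (1/c) \<odot> w" using c scale_mono by auto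
    moreover have "w \<in> carrier" using a le_carrier by blast
    ultimately show "c \<odot> (x \<curlyvee> y) \<preceq> w" using c by simp
  qed (use x y c in simp)
qed
lemma inf_scale: "c > 0 \<Longrightarrow> x \<in> carrier \<Longrightarrow> y \<in> carrier \<Longrightarrow> c \<odot> (x \<curlywedge> y) = c \<odot> x \<curlywedge> c \<odot> y"
proof -
  assume c: "c > 0" and x: "x \<in> carrier" and y: "y \<in> carrier"
  have "c \<odot> (x \<curlywedge> y) = c \<odot> neg (neg x \<curlyvee> neg y)" using neg_sup[of "neg x" "neg y"] x y by simp
  also have "\<dots> = neg (c \<odot> neg x \<curlyvee> c \<odot> neg y)" using sup_scale[OF c] x y by (simp add: scale_neg)
  also have "\<dots> = c \<odot> x \<curlywedge> c \<odot> y" using x y by (simp add: neg_sup scale_neg)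
  finally show ?thesis .
qed

definition pos_part :: "'a \<Rightarrow> 'a" where "pos_part x = x \<curlyvee> \<zero>"
definition neg_part :: "'a \<Rightarrow> 'a" where "neg_part x = neg x \<curlyvee> \<zero>"
lemma labs_eq: "labs x = x \<curlyvee> neg x" by (simp add: bl_abs_def)
lemma labs_closed[simp]: "x \<in> carrier \<Longrightarrow> labs x \<in> carrier" by (simp add: labs_eq)
lemma pos_part_closed[simp]: "x \<in> carrier \<Longrightarrow> pos_part x \<in> carrier" by (simp add: pos_part_def)
lemma neg_part_closed[simp]: "x \<in> carrier \<Longrightarrow> neg_part x \<in> carrier" by (simp add: neg_part_def)
lemma le_labs: "x \<in> carrier \<Longrightarrow> x \<preceq> labs x" by (simp add: labs_eq sup_ge1)
lemma neg_le_labs: "x \<in> carrier \<Longrightarrow> neg x \<preceq> labs x" by (simp add: labs_eq sup_ge2)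
lemma labs_least: "x \<preceq> t \<Longrightarrow> neg x \<preceq> t \<Longrightarrow> labs x \<preceq> t" by (simp add: labs_eq sup_least)
lemma labs_nonneg: "x \<in> carrier \<Longrightarrow> \<zero> \<preceq> labs x"
proof -
  assume x: "x \<in> carrier"
  have "x \<oplus> neg x \<preceq> labs x \<oplus> labs x" using add_mono[OF le_labs[OF x] neg_le_labs[OF x]] .
  hence "\<zero> \<preceq> 2 \<odot> labs x" using x scale_left_distrib[of "labs x" 1 1] by simp
  hence "(1/2) \<odot> \<zero> \<preceq> (1/2) \<odot> 2 \<odot> labs x" by (rule scale_mono) simp
  thus ?thesis using x by simp
qed
lemma labs_of_nonneg: "\<zero> \<preceq> w \<Longrightarrow> labs w = w"
  by (metis le_labs labs_least le_carrier le_antisym le_refl le_trans neg_le_zero)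
lemma labs_scale: "c > 0 \<Longrightarrow> x \<in> carrier \<Longrightarrow> labs (c \<odot> x) = c \<odot> labs x"
  by (simp add: labs_eq sup_scale scale_neg)
lemma pos_part_nonneg: "x \<in> carrier \<Longrightarrow> \<zero> \<preceq> pos_part x" by (simp add: pos_part_def sup_ge2)
lemma neg_part_nonneg: "x \<in> carrier \<Longrightarrow> \<zero> \<preceq> neg_part x" by (simp add: neg_part_def sup_ge2)
lemma pos_part_le_labs: "x \<in> carrier \<Longrightarrow> pos_part x \<preceq> labs x" by (simp add: pos_part_def sup_least le_labs labs_nonneg)
lemma neg_part_le_labs: "x \<in> carrier \<Longrightarrow> neg_part x \<preceq> labs x" by (simp add: neg_part_def sup_least neg_le_labs labs_nonneg)
lemma pos_part_sub_self: "x \<in> carrier \<Longrightarrow> pos_part x \<ominus> x = neg_part x"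
proof -
  assume x: "x \<in> carrier"
  have "pos_part x \<ominus> x = neg x \<oplus> (x \<curlyvee> \<zero>)" using x by (simp add: pos_part_def sub_eq_add_neg add_commute)
  also have "\<dots> = \<zero> \<curlyvee> neg x" using x by (simp add: add_sup_distrib)
  finally show ?thesis using x by (simp add: neg_part_def sup_comm)
qed
lemma pos_part_sub_neg_part: "x \<in> carrier \<Longrightarrow> pos_part x \<ominus> neg_part x = x"
  by (simp flip: pos_part_sub_self add: sub_eq_add_neg neg_add)
lemma pos_part_mono: "x \<preceq> y \<Longrightarrow> pos_part x \<preceq> pos_part y" by (simp add: pos_part_def sup_mono)
lemma inf_pos_part_neg_part: "x \<in> carrier \<Longrightarrow> pos_part x \<curlywedge> neg_part x = \<zero>"
proof -
  assume x: "x \<in> carrier"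
  have "pos_part x \<curlywedge> neg_part x = (pos_part x \<oplus> \<zero>) \<curlywedge> (pos_part x \<oplus> neg x)"
    using x by (simp flip: pos_part_sub_self add: sub_eq_add_neg)
  also have "\<dots> = pos_part x \<oplus> \<zero> \<curlywedge> neg x" using x by (simp add: add_inf_distrib)
  also have "\<zero> \<curlywedge> neg x = neg (pos_part x)" using x by (simp add: pos_part_def neg_sup inf_comm)
  finally show ?thesis using x by simp
qed
lemma inf_nonneg: "\<zero> \<preceq> x \<Longrightarrow> \<zero> \<preceq> y \<Longrightarrow> \<zero> \<preceq> x \<curlywedge> y" by (rule inf_greatest)
lemma inf_zero_of_nonneg: "\<zero> \<preceq> a \<Longrightarrow> a \<curlywedge> \<zero> = \<zero>"
  by (metis inf_eqI le_carrier(2) le_refl zero_closed)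

lemma norm_nonneg[simp]: "x \<in> carrier \<Longrightarrow> \<parallel>x\<parallel> \<ge> 0" using normed unfolding bl_normed_def by blast
lemma norm_eq_zero: "x \<in> carrier \<Longrightarrow> \<parallel>x\<parallel> = 0 \<longleftrightarrow> x = \<zero>" using normed unfolding bl_normed_def by blast
lemma norm_zero[simp]: "\<parallel>\<zero>\<parallel> = 0" using norm_eq_zero zero_closed by blast
lemma norm_scale: "x \<in> carrier \<Longrightarrow> \<parallel>a \<odot> x\<parallel> = \<bar>a\<bar> * \<parallel>x\<parallel>" using normed unfolding bl_normed_def by blast
lemma norm_triangle: "x \<in> carrier \<Longrightarrow> y \<in> carrier \<Longrightarrow> \<parallel>x \<oplus> y\<parallel> \<le> \<parallel>x\<parallel> + \<parallel>y\<parallel>" using normed unfolding bl_normed_def by blast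
lemma norm_neg[simp]: "x \<in> carrier \<Longrightarrow> \<parallel>neg x\<parallel> = \<parallel>x\<parallel>" by (simp add: bl_neg_def norm_scale)
lemma norm_labs[simp]: "x \<in> carrier \<Longrightarrow> \<parallel>labs x\<parallel> = \<parallel>x\<parallel>"
proof -
  assume x: "x \<in> carrier"
  have "labs (labs x) = labs x" by (rule labs_of_nonneg[OF labs_nonneg[OF x]])
  thus ?thesis using x norm_mono_labs[of x "labs x"] norm_mono_labs[of "labs x" x] by (simp add: labs_nonneg)
qed
lemma norm_mono: "v \<in> carrier \<Longrightarrow> labs v \<preceq> w \<Longrightarrow> \<parallel>v\<parallel> \<le> \<parallel>w\<parallel>"
proof -
  assume v: "v \<in> carrier" and h: "labs v \<preceq> w"
  have "\<zero> \<preceq> w" using le_trans[OF labs_nonneg[OF v] h] .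
  hence "labs w = w" by (rule labs_of_nonneg)
  thus ?thesis using norm_mono_labs[OF v le_carrier(2)[OF h]] h by simp
qed
lemma norm_mono_nonneg: "\<zero> \<preceq> v \<Longrightarrow> v \<preceq> w \<Longrightarrow> \<parallel>v\<parallel> \<le> \<parallel>w\<parallel>"
  by (metis labs_of_nonneg le_carrier(2) norm_mono)
lemma norm_sub_commute: "x \<in> carrier \<Longrightarrow> y \<in> carrier \<Longrightarrow> \<parallel>x \<ominus> y\<parallel> = \<parallel>y \<ominus> x\<parallel>"
  by (metis norm_neg sub_closed sub_eq_add_neg neg_add neg_neg add_commute neg_closed)
lemma norm_sub_triangle: "x \<in> carrier \<Longrightarrow> y \<in> carrier \<Longrightarrow> z \<in> carrier \<Longrightarrow> \<parallel>x \<ominus> z\<parallel> \<le> \<parallel>x \<ominus> y\<parallel> + \<parallel>y \<ominus> z\<parallel>"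
proof -
  assume a: "x \<in> carrier" "y \<in> carrier" "z \<in> carrier"
  have "x \<ominus> z = x \<ominus> y \<oplus> (y \<ominus> z)" using a by (simp add: vector_algebra_simps)
  thus ?thesis using norm_triangle a by simp
qed
lemma norm_diff_le_norm_sub: "x \<in> carrier \<Longrightarrow> y \<in> carrier \<Longrightarrow> \<parallel>x\<parallel> - \<parallel>y\<parallel> \<le> \<parallel>x \<ominus> y\<parallel>"
  using norm_sub_triangle[of x y "\<zero>"] by (simp add: sub_eq_add_neg)
lemma norm_sub_le: "x \<in> carrier \<Longrightarrow> y \<in> carrier \<Longrightarrow> \<parallel>x \<ominus> y\<parallel> \<le> \<parallel>x\<parallel> + \<parallel>y\<parallel>"
  using norm_triangle[of x "neg y"] by (simp add: sub_eq_add_neg)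
lemma abs_norm_diff_le_norm_sub: "x \<in> carrier \<Longrightarrow> y \<in> carrier \<Longrightarrow> \<bar>\<parallel>x\<parallel> - \<parallel>y\<parallel>\<bar> \<le> \<parallel>x \<ominus> y\<parallel>"
  using norm_diff_le_norm_sub[of x y] norm_diff_le_norm_sub[of y x] norm_sub_commute[of x y]
  unfolding abs_le_iff by linarith


lemma norm_inf_le: "x \<in> carrier \<Longrightarrow> y \<in> carrier \<Longrightarrow> \<parallel>x \<curlywedge> y\<parallel> \<le> \<parallel>x\<parallel> + \<parallel>y\<parallel>"
proof -
  assume x: "x \<in> carrier" and y: "y \<in> carrier"
  let ?T = "labs x \<oplus> labs y"
  have "x \<curlywedge> y \<preceq> x" using inf_le1 x y .
  also have "x \<preceq> labs x" using le_labs x .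
  also have "labs x \<preceq> ?T" using le_add_nonneg_right[OF labs_nonneg[OF y]] x by simp
  finally have 1: "x \<curlywedge> y \<preceq> ?T" .
  have "neg (x \<curlywedge> y) = neg x \<curlyvee> neg y" using neg_inf x y by simp
  moreover have "neg x \<preceq> ?T" using le_trans[OF neg_le_labs[OF x] le_add_nonneg_right[OF labs_nonneg[OF y]]] x by simp
  moreover have "neg y \<preceq> ?T" using le_trans[OF neg_le_labs[OF y] le_add_nonneg_left[OF labs_nonneg[OF x]]] y by simp
  ultimately have 2: "neg (x \<curlywedge> y) \<preceq> ?T" by (simp add: sup_least)
  have "\<parallel>x \<curlywedge> y\<parallel> \<le> \<parallel>?T\<parallel>" using x y by (intro norm_mono labs_least[OF 1 2]) auto
  also have "\<dots> \<le> \<parallel>x\<parallel> + \<parallel>y\<parallel>" using norm_triangle[of "labs x" "labs y"] x y by simp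
  finally show ?thesis .
qed

lemma norm_sup_le: "x \<in> carrier \<Longrightarrow> y \<in> carrier \<Longrightarrow> \<parallel>x \<curlyvee> y\<parallel> \<le> \<parallel>x\<parallel> + \<parallel>y\<parallel>"
proof -
  assume x: "x \<in> carrier" and y: "y \<in> carrier"
  have "x \<curlyvee> y = neg (neg x \<curlywedge> neg y)" using neg_inf[of "neg x" "neg y"] x y by simp
  thus ?thesis using norm_inf_le[of "neg x" "neg y"] x y by simp
qed

lemma le_sub_of_add_le: "x \<in> carrier \<Longrightarrow> z \<in> carrier \<Longrightarrow> x \<oplus> z \<preceq> w \<Longrightarrow> x \<preceq> w \<ominus> z"
proof -
  assume x: "x \<in> carrier" and z: "z \<in> carrier" and h: "x \<oplus> z \<preceq> w"
  have "x \<oplus> z \<ominus> z \<preceq> w \<ominus> z" using sub_right_mono[OF h z] .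
  thus ?thesis using x z by (simp add: sub_eq_add_neg add_assoc)
qed

lemma sup_add_le_perturbed: "x \<in> carrier \<Longrightarrow> y \<in> carrier \<Longrightarrow> z \<in> carrier \<Longrightarrow> z' \<in> carrier \<Longrightarrow> x \<oplus> z \<preceq> w \<Longrightarrow> y \<oplus> z' \<preceq> w \<Longrightarrow>
   (x \<curlyvee> y) \<oplus> neg (labs z \<oplus> labs z') \<preceq> w"
proof -
  assume x: "x \<in> carrier" and y: "y \<in> carrier" and z: "z \<in> carrier" and z': "z' \<in> carrier" and h1: "x \<oplus> z \<preceq> w" and h2: "y \<oplus> z' \<preceq> w"
  have w: "w \<in> carrier" using h1 le_carrier by blast
  let ?T = "labs z \<oplus> labs z'"
  have T: "?T \<in> carrier" using z z' by simp
  have "x \<preceq> w \<ominus> z" using le_sub_of_add_le[OF x z h1] .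
  also have "w \<ominus> z \<preceq> w \<oplus> ?T"
  proof -
    have "neg z \<preceq> ?T" using le_trans[OF neg_le_labs[OF z] le_add_nonneg_right[OF labs_nonneg[OF z']]] z by simp
    thus ?thesis using add_left_mono[of "neg z" ?T w] w by (simp add: sub_eq_add_neg)
  qed
  finally have 1: "x \<preceq> w \<oplus> ?T" .
  have "y \<preceq> w \<ominus> z'" using le_sub_of_add_le[OF y z' h2] .
  also have "w \<ominus> z' \<preceq> w \<oplus> ?T"
  proof -
    have "neg z' \<preceq> ?T" using le_trans[OF neg_le_labs[OF z'] le_add_nonneg_left[OF labs_nonneg[OF z]]] z' by simp
    thus ?thesis using add_left_mono[of "neg z'" ?T w] w by (simp add: sub_eq_add_neg)
  qed
  finally have 2: "y \<preceq> w \<oplus> ?T" .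
  have "x \<curlyvee> y \<preceq> w \<oplus> ?T" using sup_least[OF 1 2] .
  hence "x \<curlyvee> y \<oplus> neg ?T \<preceq> w \<oplus> ?T \<oplus> neg ?T" using add_right_mono T by simp
  thus ?thesis using w T by (simp add: add_assoc)
qed

lemma inf_ge_perturbed: "w \<in> carrier \<Longrightarrow> z \<in> carrier \<Longrightarrow> z' \<in> carrier \<Longrightarrow> w \<oplus> z \<preceq> x \<Longrightarrow> w \<oplus> z' \<preceq> y \<Longrightarrow>
   w \<oplus> neg (labs z \<oplus> labs z') \<preceq> x \<curlywedge> y"
proof -
  assume w: "w \<in> carrier" and z: "z \<in> carrier" and z': "z' \<in> carrier" and h1: "w \<oplus> z \<preceq> x" and h2: "w \<oplus> z' \<preceq> y"
  let ?T = "labs z \<oplus> labs z'"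
  have T: "?T \<in> carrier" using z z' by simp
  have "neg z \<preceq> ?T" using le_trans[OF neg_le_labs[OF z] le_add_nonneg_right[OF labs_nonneg[OF z']]] z by simp
  hence "neg ?T \<preceq> z" using neg_le_neg z by fastforce
  hence "w \<oplus> neg ?T \<preceq> w \<oplus> z" using add_left_mono w by blast
  hence 1: "w \<oplus> neg ?T \<preceq> x" using h1 le_trans by blast
  have "neg z' \<preceq> ?T" using le_trans[OF neg_le_labs[OF z'] le_add_nonneg_left[OF labs_nonneg[OF z]]] z' by simp
  hence "neg ?T \<preceq> z'" using neg_le_neg z' by fastforce
  hence "w \<oplus> neg ?T \<preceq> w \<oplus> z'" using add_left_mono w by blast
  hence 2: "w \<oplus> neg ?T \<preceq> y" using h2 le_trans by blast
  show ?thesis using inf_greatest[OF 1 2] .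
qed

lemma norm_sub_le_of_mutual_le: "x \<in> carrier \<Longrightarrow> y \<in> carrier \<Longrightarrow> z \<in> carrier \<Longrightarrow> z' \<in> carrier \<Longrightarrow> x \<oplus> z \<preceq> y \<Longrightarrow> y \<oplus> z' \<preceq> x \<Longrightarrow>
   \<parallel>x \<ominus> y\<parallel> \<le> 2 * \<parallel>z\<parallel> + \<parallel>z'\<parallel>"
proof -
  assume x: "x \<in> carrier" and y: "y \<in> carrier" and z: "z \<in> carrier" and z': "z' \<in> carrier" and h1: "x \<oplus> z \<preceq> y" and h2: "y \<oplus> z' \<preceq> x"
  let ?w = "y \<ominus> (x \<oplus> z)"
  have w: "?w \<in> carrier" using x y z by simp
  have w0: "\<zero> \<preceq> ?w" using sub_right_mono[OF h1, of "x \<oplus> z"] x z by (simp add: sub_eq_add_neg)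
  have "y \<oplus> z' \<ominus> (x \<oplus> z) \<preceq> x \<ominus> (x \<oplus> z)" using sub_right_mono[OF h2, of "x \<oplus> z"] x z by simp
  moreover have "y \<oplus> z' \<ominus> (x \<oplus> z) = ?w \<oplus> z'" using x y z z' by (simp add: vector_algebra_simps)
  moreover have "x \<ominus> (x \<oplus> z) = neg z" using x z by (simp add: vector_algebra_simps)
  ultimately have "?w \<oplus> z' \<preceq> neg z" by simp
  hence "?w \<oplus> z' \<ominus> z' \<preceq> neg z \<ominus> z'" using sub_right_mono z' by blast
  hence "?w \<preceq> neg (z \<oplus> z')" using w z z' by (simp add: vector_algebra_simps)
  hence "\<parallel>?w\<parallel> \<le> \<parallel>neg (z \<oplus> z')\<parallel>" using norm_mono_nonneg[OF w0] by blast
  also have "\<dots> \<le> \<parallel>z\<parallel> + \<parallel>z'\<parallel>" using norm_triangle z z' by simp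
  finally have 1: "\<parallel>?w\<parallel> \<le> \<parallel>z\<parallel> + \<parallel>z'\<parallel>" .
  have "x \<ominus> y = neg (?w \<oplus> z)" using x y z by (simp add: vector_algebra_simps)
  hence "\<parallel>x \<ominus> y\<parallel> \<le> \<parallel>?w\<parallel> + \<parallel>z\<parallel>" using norm_triangle[OF w z] w z by simp
  thus ?thesis using 1 by simp
qed


lemma dist_le_norm_sub: "M \<subseteq> carrier \<Longrightarrow> m \<in> M \<Longrightarrow> x \<in> carrier \<Longrightarrow> bl_dist E x M \<le> \<parallel>x \<ominus> m\<parallel>"
  unfolding bl_dist_def by (rule cInf_lower) (auto intro!: bdd_belowI[of _ 0])

lemma norm_normalize: "y \<in> carrier \<Longrightarrow> \<parallel>y\<parallel> > 0 \<Longrightarrow> \<parallel>(1 / \<parallel>y\<parallel>) \<odot> y\<parallel> = 1"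
  by (simp add: norm_scale)

lemma norm_sub_normalize_le:
  assumes x: "x \<in> carrier" and y: "y \<in> carrier" and pos: "\<parallel>y\<parallel> > 0"
  shows "\<parallel>x \<ominus> (1 / \<parallel>y\<parallel>) \<odot> y\<parallel> \<le> \<parallel>x \<ominus> y\<parallel> + \<bar>1 - \<parallel>y\<parallel>\<bar>"
proof -
  have "y \<ominus> (1 / \<parallel>y\<parallel>) \<odot> y = (1 - 1 / \<parallel>y\<parallel>) \<odot> y"
    using scale_left_distrib[OF y, of 1 "- (1 / \<parallel>y\<parallel>)"] y by (simp add: sub_eq_add_neg bl_neg_def)
  then have "\<parallel>y \<ominus> (1 / \<parallel>y\<parallel>) \<odot> y\<parallel> = \<bar>(1 - 1 / \<parallel>y\<parallel>) * \<parallel>y\<parallel>\<bar>"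
    using y pos by (simp add: norm_scale abs_mult)
  also have "(1 - 1 / \<parallel>y\<parallel>) * \<parallel>y\<parallel> = \<parallel>y\<parallel> - 1"
    using pos by (simp add: field_simps)
  finally show ?thesis
    using norm_sub_triangle[OF x y, of "(1 / \<parallel>y\<parallel>) \<odot> y"] y by simp
qed

text \<open>Given approximants \<open>m l\<close> of \<open>p\<close> from \<open>M\<close>, a single element of \<open>M\<close> is as close to \<open>p\<close>
  as the approximants are along their longest initial run of good approximations: take the
  last approximant before the first bad one, or \<open>p\<close> itself if there is none.\<close>

lemma closed_subspace_mem_if_approx:
  assumes M: "closed_subspace E M" and p: "p \<in> carrier" and m: "\<And>j. m j \<in> M"
    and close: "\<And>l. \<parallel>m l \<ominus> p\<parallel> < 1 / Suc l"
  shows "p \<in> M"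
proof (rule closed_subspace_limit[OF M m p])
  fix e :: real assume "e > 0"
  then obtain K :: nat where K: "1 / Suc K < e" by (metis nat_approx_posE)
  have "\<parallel>m k \<ominus> p\<parallel> < e" if "K \<le> k" for k
  proof -
    have "1 / real (Suc k) \<le> 1 / Suc K" using that by (intro divide_left_mono) auto
    then show ?thesis using close[of k] K by linarith
  qed
  then show "\<exists>K. \<forall>k\<ge>K. \<parallel>m k \<ominus> p\<parallel> < e" by blast
qed

lemma closed_subspace_select_approx:
  assumes M: "closed_subspace E M" and p: "p \<in> carrier" and m: "\<And>j. m j \<in> M"
  shows "\<exists>q\<in>M. \<parallel>q\<parallel> \<le> \<parallel>p\<parallel> + 1 \<and>
    (\<forall>j. (\<forall>l\<le>j. \<parallel>m l \<ominus> p\<parallel> < 1 / Suc l) \<longrightarrow> \<parallel>q \<ominus> p\<parallel> \<le> 1 / Suc j)"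
proof (cases "\<forall>l. \<parallel>m l \<ominus> p\<parallel> < 1 / Suc l")
  case True
  have "p \<in> M" by (rule closed_subspace_mem_if_approx[OF M p, where m = m]) (use m True in auto)
  then show ?thesis using p by (intro bexI[of _ p]) (simp_all add: sub_eq_add_neg)
next
  case False
  define J where "J = (LEAST l. \<not> \<parallel>m l \<ominus> p\<parallel> < 1 / Suc l)"
  have bad_J: "\<not> \<parallel>m J \<ominus> p\<parallel> < 1 / Suc J"
    using False unfolding J_def by (metis (mono_tags) LeastI)
  have good_before_J: "\<parallel>m l \<ominus> p\<parallel> < 1 / Suc l" if "l < J" for l
    using that not_less_Least unfolding J_def by blast
  have run_below_J: "j < J" if "\<forall>l\<le>j. \<parallel>m l \<ominus> p\<parallel> < 1 / Suc l" for j
    using that bad_J by (meson not_le)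
  show ?thesis
  proof (cases J)
    case 0
    then show ?thesis
      using run_below_J closed_subspace_zero[OF M] p by (intro bexI[of _ "\<zero>"]) auto
  next
    case (Suc l)
    have ml: "m l \<in> carrier" using m closed_subspace_subset[OF M] by blast
    have close: "\<parallel>m l \<ominus> p\<parallel> < 1 / Suc l" using good_before_J Suc by simp
    show ?thesis
    proof (intro bexI[of _ "m l"] conjI allI impI)
      have "\<parallel>m l\<parallel> - \<parallel>p\<parallel> \<le> \<parallel>m l \<ominus> p\<parallel>" using norm_diff_le_norm_sub ml p .
      moreover have "1 / real (Suc l) \<le> 1" by simp
      ultimately show "\<parallel>m l\<parallel> \<le> \<parallel>p\<parallel> + 1" using close by linarith
    next
      fix j assume "\<forall>l'\<le>j. \<parallel>m l' \<ominus> p\<parallel> < 1 / Suc l'"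
      then have "j < Suc l" using run_below_J Suc by blast
      then have "j \<le> l" by simp
      then have "1 / real (Suc l) \<le> 1 / Suc j" by (intro divide_left_mono) auto
      then show "\<parallel>m l \<ominus> p\<parallel> \<le> 1 / Suc j" using close by linarith
    qed (rule m)
  qed
qed



lemma sum_closed: "(\<And>l. l < m \<Longrightarrow> f l \<in> carrier) \<Longrightarrow> bl_sum E f m \<in> carrier"
  by (induction m) auto
lemma sum_nonneg: "(\<And>l. l < m \<Longrightarrow> \<zero> \<preceq> f l) \<Longrightarrow> \<zero> \<preceq> bl_sum E f m"
proof (induction m)
  case 0 thus ?case by simp
next
  case (Suc m)
  have "\<zero> \<oplus> \<zero> \<preceq> bl_sum E f m \<oplus> f m" using Suc by (intro add_mono) auto
  thus ?case by simp
qed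
lemma le_sum_nonneg: "(\<And>l. l < m \<Longrightarrow> \<zero> \<preceq> f l) \<Longrightarrow> j < m \<Longrightarrow> f j \<preceq> bl_sum E f m"
proof (induction m)
  case 0 thus ?case by simp
next
  case (Suc m)
  have fin: "\<And>l. l < m \<Longrightarrow> f l \<in> carrier" using Suc.prems(1) le_carrier by (meson less_SucI)
  have S: "\<zero> \<preceq> bl_sum E f m" using Suc.prems(1) by (intro sum_nonneg) auto
  have fm: "\<zero> \<preceq> f m" using Suc.prems(1) by auto
  show ?case
  proof (cases "j = m")
    case True
    thus ?thesis using le_add_nonneg_left[OF S, of "f m"] fm le_carrier by simp
  next
    case False
    hence "f j \<preceq> bl_sum E f m" using Suc by auto
    moreover have "bl_sum E f m \<preceq> bl_sum E f m \<oplus> f m" using le_add_nonneg_right[OF fm] sum_closed[OF fin] .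
    ultimately show ?thesis by (simp add: le_trans)
  qed
qed
lemma norm_sum_le: "(\<And>l. l < m \<Longrightarrow> f l \<in> carrier) \<Longrightarrow> \<parallel>bl_sum E f m\<parallel> \<le> (\<Sum>l<m. \<parallel>f l\<parallel>)"
proof (induction m)
  case 0 thus ?case by simp
next
  case (Suc m)
  have "\<parallel>bl_sum E f (Suc m)\<parallel> \<le> \<parallel>bl_sum E f m\<parallel> + \<parallel>f m\<parallel>"
    using Suc.prems by (simp add: norm_triangle sum_closed)
  also have "\<dots> \<le> (\<Sum>l<m. \<parallel>f l\<parallel>) + \<parallel>f m\<parallel>" using Suc by simp
  finally show ?case by simp
qed

lemma inf_add_le: "\<zero> \<preceq> a \<Longrightarrow> \<zero> \<preceq> b \<Longrightarrow> \<zero> \<preceq> c \<Longrightarrow> a \<curlywedge> (b \<oplus> c) \<preceq> (a \<curlywedge> b) \<oplus> (a \<curlywedge> c)"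
proof -
  assume a0: "\<zero> \<preceq> a" and b0: "\<zero> \<preceq> b" and c0: "\<zero> \<preceq> c"
  have a: "a \<in> carrier" and b: "b \<in> carrier" and c: "c \<in> carrier" using a0 b0 c0 le_carrier by auto
  let ?m = "a \<curlywedge> (b \<oplus> c)"
  have L1: "?m \<preceq> a" and L2: "?m \<preceq> b \<oplus> c" using a b c by (auto intro: inf_le1 inf_le2)
  have e1: "a \<curlywedge> b \<oplus> a \<curlywedge> c = (a \<oplus> a \<curlywedge> c) \<curlywedge> (b \<oplus> a \<curlywedge> c)"
    using a b c add_inf_distrib[of a b "a \<curlywedge> c"] add_commute by simp
  have e2: "a \<oplus> a \<curlywedge> c = (a \<oplus> a) \<curlywedge> (a \<oplus> c)" using a c by (simp add: add_inf_distrib)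
  have e3: "b \<oplus> a \<curlywedge> c = (b \<oplus> a) \<curlywedge> (b \<oplus> c)" using a b c by (simp add: add_inf_distrib)
  have "?m \<preceq> a \<oplus> a" using le_trans[OF L1 le_add_nonneg_right[OF a0 a]] .
  moreover have "?m \<preceq> a \<oplus> c" using le_trans[OF L1 le_add_nonneg_right[OF c0 a]] .
  ultimately have "?m \<preceq> a \<oplus> a \<curlywedge> c" unfolding e2 by (rule inf_greatest)
  moreover have "?m \<preceq> b \<oplus> a" using le_trans[OF L1 le_add_nonneg_left[OF b0 a]] .
  hence "?m \<preceq> b \<oplus> a \<curlywedge> c" unfolding e3 using L2 by (rule inf_greatest)
  ultimately show ?thesis unfolding e1 by (rule inf_greatest)
qed

lemma inf_sum_le: "\<zero> \<preceq> a \<Longrightarrow> (\<And>l. l < m \<Longrightarrow> \<zero> \<preceq> f l) \<Longrightarrow>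
   a \<curlywedge> bl_sum E f m \<preceq> bl_sum E (\<lambda>l. a \<curlywedge> f l) m"
proof (induction m)
  case 0 thus ?case using inf_zero_of_nonneg by (simp add: le_carrier)
next
  case (Suc m)
  have a: "a \<in> carrier" using Suc le_carrier by auto
  have fin: "\<And>l. l < Suc m \<Longrightarrow> f l \<in> carrier" using Suc.prems(2) le_carrier by blast
  have S: "\<zero> \<preceq> bl_sum E f m" using Suc.prems(2) by (intro sum_nonneg) auto
  have "a \<curlywedge> bl_sum E f (Suc m) \<preceq> a \<curlywedge> bl_sum E f m \<oplus> a \<curlywedge> f m"
    using inf_add_le[OF Suc.prems(1) S Suc.prems(2)[of m]] by simp
  also have "\<dots> \<preceq> bl_sum E (\<lambda>l. a \<curlywedge> f l) m \<oplus> a \<curlywedge> f m"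
    using Suc a fin by (intro add_right_mono) auto
  finally show ?case by simp
qed

definition others_sum :: "(nat \<Rightarrow> 'a) \<Rightarrow> nat \<Rightarrow> nat \<Rightarrow> 'a"
  where "others_sum x n k = bl_sum E (\<lambda>l. if l = k then \<zero> else labs (x l)) n"

text \<open>Removing from \<open>x\<^sub>k\<close> what it shares with the other \<open>|x\<^sub>l|\<close>: the result is
  \<open>(x\<^sub>k\<^sup>+ - s)\<^sup>+ - (x\<^sub>k\<^sup>- - s)\<^sup>+\<close> with \<open>s = \<Sum>\<^sub>l\<^sub>\<noteq>\<^sub>k |x\<^sub>l|\<close>, which is dominated by
  \<open>(|x\<^sub>k| - |x\<^sub>l|)\<^sup>+\<close> for every \<open>l \<noteq> k\<close> and hence disjoint from the others.\<close>

definition disjointify :: "(nat \<Rightarrow> 'a) \<Rightarrow> nat \<Rightarrow> nat \<Rightarrow> 'a"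
  where "disjointify x n k =
    x k \<ominus> (pos_part (x k) \<curlywedge> others_sum x n k) \<oplus> (neg_part (x k) \<curlywedge> others_sum x n k)"

lemma others_sum_nonneg: "(\<And>j. j < n \<Longrightarrow> x j \<in> carrier) \<Longrightarrow> \<zero> \<preceq> others_sum x n k"
  unfolding others_sum_def by (rule sum_nonneg) (auto simp: labs_nonneg)
lemma others_sum_closed: "(\<And>j. j < n \<Longrightarrow> x j \<in> carrier) \<Longrightarrow> others_sum x n k \<in> carrier"
  using others_sum_nonneg le_carrier by blast
lemma labs_le_others_sum: "(\<And>j. j < n \<Longrightarrow> x j \<in> carrier) \<Longrightarrow> l < n \<Longrightarrow> l \<noteq> k \<Longrightarrow> labs (x l) \<preceq> others_sum x n k"
  unfolding others_sum_def using le_sum_nonneg[of n "\<lambda>l. if l = k then \<zero> else labs (x l)" l] by (auto simp: labs_nonneg)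

lemma disjointify_closed: "(\<And>j. j < n \<Longrightarrow> x j \<in> carrier) \<Longrightarrow> k < n \<Longrightarrow> disjointify x n k \<in> carrier"
  unfolding disjointify_def using others_sum_closed by simp

lemma sub_inf_eq_pos_part: "p \<in> carrier \<Longrightarrow> s \<in> carrier \<Longrightarrow> p \<ominus> (p \<curlywedge> s) = pos_part (p \<ominus> s)"
proof -
  assume p: "p \<in> carrier" and s: "s \<in> carrier"
  have "p \<ominus> p \<curlywedge> s = p \<oplus> (neg p \<curlyvee> neg s)" using p s by (simp add: sub_eq_add_neg neg_inf)
  also have "\<dots> = \<zero> \<curlyvee> (p \<ominus> s)" using p s by (simp add: add_sup_distrib sub_eq_add_neg)
  finally show ?thesis using p s by (simp add: pos_part_def sup_comm)
qed

lemma labs_disjointify_le: "(\<And>j. j < n \<Longrightarrow> x j \<in> carrier) \<Longrightarrow> k < n \<Longrightarrow> labs (disjointify x n k) \<preceq> pos_part (labs (x k) \<ominus> others_sum x n k)"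
proof -
  assume X: "\<And>j. j < n \<Longrightarrow> x j \<in> carrier" and k: "k < n"
  let ?x = "x k" let ?s = "others_sum x n k"
  have x: "?x \<in> carrier" and s: "?s \<in> carrier" using X k others_sum_closed by auto
  let ?P = "pos_part ?x \<ominus> pos_part ?x \<curlywedge> ?s" and ?Q = "neg_part ?x \<ominus> neg_part ?x \<curlywedge> ?s"
  let ?R = "pos_part (labs ?x \<ominus> ?s)"
  have eq: "disjointify x n k = ?P \<ominus> ?Q"
  proof -
    have "disjointify x n k = pos_part ?x \<ominus> neg_part ?x \<ominus> pos_part ?x \<curlywedge> ?s \<oplus> neg_part ?x \<curlywedge> ?s"
      unfolding disjointify_def using pos_part_sub_neg_part[OF x] by simp
    thus ?thesis using x s by (simp add: vector_algebra_simps)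
  qed
  have P: "?P = pos_part (pos_part ?x \<ominus> ?s)" and Q: "?Q = pos_part (neg_part ?x \<ominus> ?s)" using x s by (simp_all add: sub_inf_eq_pos_part)
  have PR: "?P \<preceq> ?R" unfolding P using x s by (intro pos_part_mono sub_right_mono pos_part_le_labs)
  have QR: "?Q \<preceq> ?R" unfolding Q using x s by (intro pos_part_mono sub_right_mono neg_part_le_labs)
  have P0: "\<zero> \<preceq> ?P" unfolding P using x s by (simp add: pos_part_nonneg)
  have Q0: "\<zero> \<preceq> ?Q" unfolding Q using x s by (simp add: pos_part_nonneg)
  have Pin: "?P \<in> carrier" and Qin: "?Q \<in> carrier" using x s by auto
  have "?P \<ominus> ?Q \<preceq> ?P" by (rule sub_nonneg_le[OF Q0 Pin])
  hence 1: "?P \<ominus> ?Q \<preceq> ?R" using PR le_trans by blast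
  have "neg (?P \<ominus> ?Q) = ?Q \<ominus> ?P" using Pin Qin by (simp add: vector_algebra_simps)
  moreover have "?Q \<ominus> ?P \<preceq> ?Q" by (rule sub_nonneg_le[OF P0 Qin])
  ultimately have 2: "neg (?P \<ominus> ?Q) \<preceq> ?R" using QR le_trans by simp
  show ?thesis unfolding eq using labs_least[OF 1 2] .
qed

lemma disjointify_disjoint: "(\<And>j. j < n \<Longrightarrow> x j \<in> carrier) \<Longrightarrow> k < n \<Longrightarrow> l < n \<Longrightarrow> k \<noteq> l \<Longrightarrow>
   bl_disjoint E (disjointify x n k) (disjointify x n l)"
proof -
  assume X: "\<And>j. j < n \<Longrightarrow> x j \<in> carrier" and k: "k < n" and l: "l < n" and kl: "k \<noteq> l"
  have xk: "x k \<in> carrier" and xl: "x l \<in> carrier" using X k l by auto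
  let ?u = "labs (x k) \<ominus> labs (x l)"
  have u: "?u \<in> carrier" using xk xl by simp
  have "labs (disjointify x n k) \<preceq> pos_part (labs (x k) \<ominus> others_sum x n k)" by (rule labs_disjointify_le[OF X k])
  also have "\<dots> \<preceq> pos_part ?u" using labs_le_others_sum[OF X l kl[symmetric]] xk by (intro pos_part_mono sub_left_antimono) auto
  finally have A: "labs (disjointify x n k) \<preceq> pos_part ?u" .
  have "labs (disjointify x n l) \<preceq> pos_part (labs (x l) \<ominus> others_sum x n l)" by (rule labs_disjointify_le[OF X l])
  also have "\<dots> \<preceq> pos_part (labs (x l) \<ominus> labs (x k))" using labs_le_others_sum[OF X k kl] xl by (intro pos_part_mono sub_left_antimono) auto
  also have "labs (x l) \<ominus> labs (x k) = neg ?u" using xk xl by (simp add: vector_algebra_simps)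
  finally have B: "labs (disjointify x n l) \<preceq> neg_part ?u" by (simp add: neg_part_def pos_part_def)
  have "labs (disjointify x n k) \<curlywedge> labs (disjointify x n l) \<preceq> pos_part ?u \<curlywedge> neg_part ?u" by (rule inf_mono[OF A B])
  hence "labs (disjointify x n k) \<curlywedge> labs (disjointify x n l) \<preceq> \<zero>" using inf_pos_part_neg_part[OF u] by simp
  moreover have "\<zero> \<preceq> labs (disjointify x n k) \<curlywedge> labs (disjointify x n l)"
    using disjointify_closed[OF X k] disjointify_closed[OF X l] by (intro inf_nonneg labs_nonneg)
  ultimately have "labs (disjointify x n k) \<curlywedge> labs (disjointify x n l) = \<zero>" by (rule le_antisym)
  then show ?thesis unfolding bl_disjoint_def .
qed

lemma norm_sub_disjointify_le: "(\<And>j. j < n \<Longrightarrow> x j \<in> carrier) \<Longrightarrow> k < n \<Longrightarrow>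
   \<parallel>x k \<ominus> disjointify x n k\<parallel> \<le> (\<Sum>l<n. if l = k then 0 else \<parallel>labs (x k) \<curlywedge> labs (x l)\<parallel>)"
proof -
  assume X: "\<And>j. j < n \<Longrightarrow> x j \<in> carrier" and k: "k < n"
  let ?x = "x k" let ?s = "others_sum x n k" let ?a = "labs ?x"
  have x: "?x \<in> carrier" and s: "?s \<in> carrier" using X k others_sum_closed by auto
  let ?G = "pos_part ?x \<curlywedge> ?s" and ?H = "neg_part ?x \<curlywedge> ?s"
  have Gin: "?G \<in> carrier" and Hin: "?H \<in> carrier" using x s by auto
  have eq: "?x \<ominus> disjointify x n k = ?G \<ominus> ?H" unfolding disjointify_def using x Gin Hin by (simp add: vector_algebra_simps)
  have s0: "\<zero> \<preceq> ?s" using others_sum_nonneg X by blast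
  have G0: "\<zero> \<preceq> ?G" using x s0 by (intro inf_nonneg pos_part_nonneg)
  have H0: "\<zero> \<preceq> ?H" using x s0 by (intro inf_nonneg neg_part_nonneg)
  have GA: "?G \<preceq> ?a \<curlywedge> ?s" using x s by (intro inf_mono pos_part_le_labs) auto
  have HA: "?H \<preceq> ?a \<curlywedge> ?s" using x s by (intro inf_mono neg_part_le_labs) auto
  have 1: "?G \<ominus> ?H \<preceq> ?a \<curlywedge> ?s" using le_trans[OF sub_nonneg_le[OF H0 Gin] GA] .
  have "neg (?G \<ominus> ?H) = ?H \<ominus> ?G" using Gin Hin by (simp add: vector_algebra_simps)
  hence 2: "neg (?G \<ominus> ?H) \<preceq> ?a \<curlywedge> ?s" using le_trans[OF sub_nonneg_le[OF G0 Hin] HA] by simp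
  have "\<parallel>?x \<ominus> disjointify x n k\<parallel> \<le> \<parallel>?a \<curlywedge> ?s\<parallel>"
    unfolding eq using Gin Hin by (intro norm_mono labs_least[OF 1 2]) auto
  also have "\<dots> \<le> \<parallel>bl_sum E (\<lambda>l. ?a \<curlywedge> (if l = k then \<zero> else labs (x l))) n\<parallel>"
    unfolding others_sum_def using x X
    by (intro norm_mono_nonneg inf_sum_le inf_nonneg labs_nonneg sum_nonneg) (auto simp: labs_nonneg)
  also have "\<dots> \<le> (\<Sum>l<n. \<parallel>?a \<curlywedge> (if l = k then \<zero> else labs (x l))\<parallel>)"
    using x X by (intro norm_sum_le) auto
  also have "\<dots> = (\<Sum>l<n. if l = k then 0 else \<parallel>?a \<curlywedge> labs (x l)\<parallel>)"
    using x by (intro sum.cong) (auto simp: inf_zero_of_nonneg labs_nonneg)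
  finally show ?thesis .
qed

lemma scale_left_mono: "\<zero> \<preceq> u \<Longrightarrow> 0 \<le> c \<Longrightarrow> c \<le> d \<Longrightarrow> c \<odot> u \<preceq> d \<odot> u"
proof -
  assume u0: "\<zero> \<preceq> u" and c: "0 \<le> c" "c \<le> d"
  have u: "u \<in> carrier" using u0 le_carrier by auto
  have "d \<odot> u = c \<odot> u \<oplus> (d - c) \<odot> u" using scale_left_distrib[OF u, of c "d - c"] by simp
  moreover have "\<zero> \<preceq> (d - c) \<odot> u" using scale_mono[OF u0, of "d - c"] c by simp
  ultimately show ?thesis using le_add_nonneg_right u by simp
qed

lemma inf_scale_eq_zero: "\<zero> \<preceq> u \<Longrightarrow> \<zero> \<preceq> v \<Longrightarrow> u \<curlywedge> v = \<zero> \<Longrightarrow> c > 0 \<Longrightarrow> d > 0 \<Longrightarrow>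
   c \<odot> u \<curlywedge> d \<odot> v = \<zero>"
proof -
  assume u0: "\<zero> \<preceq> u" and v0: "\<zero> \<preceq> v" and uv: "u \<curlywedge> v = \<zero>" and c: "c > 0" and d: "d > 0"
  have u: "u \<in> carrier" and v: "v \<in> carrier" using u0 v0 le_carrier by auto
  let ?m = "max c d"
  have "c \<odot> u \<curlywedge> d \<odot> v \<preceq> ?m \<odot> u \<curlywedge> ?m \<odot> v"
    using c d u0 v0 by (intro inf_mono scale_left_mono) auto
  also have "?m \<odot> u \<curlywedge> ?m \<odot> v = ?m \<odot> (u \<curlywedge> v)" using c u v by (simp add: inf_scale)
  finally have "c \<odot> u \<curlywedge> d \<odot> v \<preceq> \<zero>" using uv by simp
  moreover have "\<zero> \<preceq> c \<odot> u \<curlywedge> d \<odot> v"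
    using scale_mono[OF u0, of c] scale_mono[OF v0, of d] c d by (intro inf_nonneg) auto
  ultimately show ?thesis by (rule le_antisym)
qed

lemma disjoint_scale: "x \<in> carrier \<Longrightarrow> y \<in> carrier \<Longrightarrow> bl_disjoint E x y \<Longrightarrow> c > 0 \<Longrightarrow> d > 0 \<Longrightarrow>
   bl_disjoint E (c \<odot> x) (d \<odot> y)"
  unfolding bl_disjoint_def by (simp add: labs_scale inf_scale_eq_zero labs_nonneg)

end

lemma blat_banach_latticeI: "banach_lattice E \<Longrightarrow> blat_banach_lattice E"
  by (simp add: blat_banach_lattice_def blat_banach_lattice_axioms_def blat_vector_space_def banach_lattice_def)

section \<open>Ultraproducts\<close>

locale blat_ultraproduct =
  fixes E :: "'i \<Rightarrow> 'a blat" and U :: "'i filter"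
  assumes banach_lattices: "\<And>i. banach_lattice (E i)" and ultrafilter: "is_ultrafilter U"
begin

abbreviation Bdd where "Bdd \<equiv> up_linf E"
abbreviation Null where "Null \<equiv> up_null E U"
abbreviation cls where "cls \<equiv> up_class E U"
abbreviation UP where "UP \<equiv> ultraproduct E U"

abbreviation cadd ("_ \<oplus>\<^bsub>_\<^esub> _" [65, 1000, 66] 65) where "x \<oplus>\<^bsub>i\<^esub> y \<equiv> bl_add (E i) x y"
abbreviation csub ("_ \<ominus>\<^bsub>_\<^esub> _" [65, 1000, 66] 65) where "x \<ominus>\<^bsub>i\<^esub> y \<equiv> bl_minus (E i) x y"
abbreviation cscale ("_ \<odot>\<^bsub>_\<^esub> _" [76, 1000, 75] 75) where "c \<odot>\<^bsub>i\<^esub> x \<equiv> bl_smult (E i) c x"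
abbreviation czero ("\<zero>\<^bsub>_\<^esub>") where "\<zero>\<^bsub>i\<^esub> \<equiv> bl_zero (E i)"
abbreviation cle ("_ \<preceq>\<^bsub>_\<^esub> _" [51, 1000, 51] 50) where "x \<preceq>\<^bsub>i\<^esub> y \<equiv> bl_le (E i) x y"
abbreviation csup ("_ \<curlyvee>\<^bsub>_\<^esub> _" [65, 1000, 66] 65) where "x \<curlyvee>\<^bsub>i\<^esub> y \<equiv> bl_sup (E i) x y"
abbreviation cinf ("_ \<curlywedge>\<^bsub>_\<^esub> _" [70, 1000, 71] 70) where "x \<curlywedge>\<^bsub>i\<^esub> y \<equiv> bl_inf (E i) x y"
abbreviation cnorm ("\<parallel>_\<parallel>\<^bsub>_\<^esub>") where "\<parallel>x\<parallel>\<^bsub>i\<^esub> \<equiv> bl_norm (E i) x"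

lemma component_lattice: "blat_banach_lattice (E i)"
  using banach_lattices blat_banach_latticeI by blast
lemma component_space: "blat_vector_space (E i)"
  using component_lattice blat_banach_lattice_def by blast
lemma U_not_bot: "U \<noteq> bot"
  using ultrafilter is_ultrafilter_def by blast

lemmas zero_closed[simp] = blat_vector_space.zero_closed[OF component_space]
lemmas add_closed[simp] = blat_vector_space.add_closed[OF component_space]
lemmas scale_closed[simp] = blat_vector_space.scale_closed[OF component_space]
lemmas neg_closed[simp] = blat_vector_space.neg_closed[OF component_space]
lemmas sub_closed[simp] = blat_vector_space.sub_closed[OF component_space]
lemmas sup_closed[simp] = blat_banach_lattice.sup_closed[OF component_lattice]
lemmas inf_closed[simp] = blat_banach_lattice.inf_closed[OF component_lattice]
lemmas labs_closed[simp] = blat_banach_lattice.labs_closed[OF component_lattice]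
lemmas add_0_right[simp] = blat_vector_space.add_0_right[OF component_space]
lemmas neg_zero[simp] = blat_vector_space.neg_zero[OF component_space]
lemmas add_neg_self[simp] = blat_vector_space.add_neg_self[OF component_space]
lemmas vector_algebra_simps = blat_vector_space.vector_algebra_simps[OF component_space]
lemmas add_assoc = blat_vector_space.add_assoc[OF component_space]
lemmas add_sub_cancel = blat_vector_space.add_sub_cancel[OF component_space]
lemmas sub_eq_add_neg = blat_vector_space.sub_eq_add_neg[OF component_space]
lemmas scale_right_distrib = blat_vector_space.scale_right_distrib[OF component_space]
lemmas scale_neg = blat_vector_space.scale_neg[OF component_space]
lemmas norm_nonneg[simp] = blat_banach_lattice.norm_nonneg[OF component_lattice]
lemmas norm_zero[simp] = blat_banach_lattice.norm_zero[OF component_lattice]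
lemmas norm_neg[simp] = blat_banach_lattice.norm_neg[OF component_lattice]
lemmas norm_labs[simp] = blat_banach_lattice.norm_labs[OF component_lattice]
lemmas norm_scale = blat_banach_lattice.norm_scale[OF component_lattice]
lemmas norm_triangle = blat_banach_lattice.norm_triangle[OF component_lattice]
lemmas norm_sub_commute = blat_banach_lattice.norm_sub_commute[OF component_lattice]
lemmas norm_sub_triangle = blat_banach_lattice.norm_sub_triangle[OF component_lattice]
lemmas norm_sub_le = blat_banach_lattice.norm_sub_le[OF component_lattice]
lemmas norm_diff_le_norm_sub = blat_banach_lattice.norm_diff_le_norm_sub[OF component_lattice]
lemmas abs_norm_diff_le_norm_sub = blat_banach_lattice.abs_norm_diff_le_norm_sub[OF component_lattice]

definition pw_add :: "('i \<Rightarrow> 'a) \<Rightarrow> ('i \<Rightarrow> 'a) \<Rightarrow> 'i \<Rightarrow> 'a"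
  where "pw_add x y = (\<lambda>i. x i \<oplus>\<^bsub>i\<^esub> y i)"
definition pw_sub :: "('i \<Rightarrow> 'a) \<Rightarrow> ('i \<Rightarrow> 'a) \<Rightarrow> 'i \<Rightarrow> 'a"
  where "pw_sub x y = (\<lambda>i. x i \<ominus>\<^bsub>i\<^esub> y i)"
definition pw_scale :: "real \<Rightarrow> ('i \<Rightarrow> 'a) \<Rightarrow> 'i \<Rightarrow> 'a"
  where "pw_scale c x = (\<lambda>i. c \<odot>\<^bsub>i\<^esub> x i)"
definition pw_neg :: "('i \<Rightarrow> 'a) \<Rightarrow> 'i \<Rightarrow> 'a"
  where "pw_neg x = (\<lambda>i. bl_neg (E i) (x i))"
definition pw_zero :: "'i \<Rightarrow> 'a"
  where "pw_zero = (\<lambda>i. \<zero>\<^bsub>i\<^esub>)"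
definition pw_sup :: "('i \<Rightarrow> 'a) \<Rightarrow> ('i \<Rightarrow> 'a) \<Rightarrow> 'i \<Rightarrow> 'a"
  where "pw_sup x y = (\<lambda>i. x i \<curlyvee>\<^bsub>i\<^esub> y i)"
definition pw_inf :: "('i \<Rightarrow> 'a) \<Rightarrow> ('i \<Rightarrow> 'a) \<Rightarrow> 'i \<Rightarrow> 'a"
  where "pw_inf x y = (\<lambda>i. x i \<curlywedge>\<^bsub>i\<^esub> y i)"
definition pw_abs :: "('i \<Rightarrow> 'a) \<Rightarrow> 'i \<Rightarrow> 'a"
  where "pw_abs x = (\<lambda>i. bl_abs (E i) (x i))"

definition asymp_eq :: "('i \<Rightarrow> 'a) \<Rightarrow> ('i \<Rightarrow> 'a) \<Rightarrow> bool"
  where "asymp_eq x y \<longleftrightarrow> x \<in> Bdd \<and> y \<in> Bdd \<and> ((\<lambda>i. \<parallel>x i \<ominus>\<^bsub>i\<^esub> y i\<parallel>\<^bsub>i\<^esub>) \<longlongrightarrow> 0) U"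

lemma Bdd_iff: "x \<in> Bdd \<longleftrightarrow> (\<forall>i. x i \<in> bl_carrier (E i)) \<and> (\<exists>K. \<forall>i. \<parallel>x i\<parallel>\<^bsub>i\<^esub> \<le> K)"
  unfolding up_linf_def bdd_above_def by auto
lemma BddI: "(\<And>i. x i \<in> bl_carrier (E i)) \<Longrightarrow> (\<And>i. \<parallel>x i\<parallel>\<^bsub>i\<^esub> \<le> K) \<Longrightarrow> x \<in> Bdd"
  unfolding Bdd_iff by blast
lemma Bdd_carrier: "x \<in> Bdd \<Longrightarrow> x i \<in> bl_carrier (E i)"
  unfolding Bdd_iff by blast
lemma Bdd_bound: "x \<in> Bdd \<Longrightarrow> \<exists>K. \<forall>i. \<parallel>x i\<parallel>\<^bsub>i\<^esub> \<le> K"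
  unfolding Bdd_iff by blast

lemma Bdd_dominated:
  assumes "\<And>i. w i \<in> bl_carrier (E i)" and "x \<in> Bdd" "y \<in> Bdd"
    and "\<And>i. \<parallel>w i\<parallel>\<^bsub>i\<^esub> \<le> \<parallel>x i\<parallel>\<^bsub>i\<^esub> + \<parallel>y i\<parallel>\<^bsub>i\<^esub>"
  shows "w \<in> Bdd"
proof -
  obtain K1 K2 where "\<forall>i. \<parallel>x i\<parallel>\<^bsub>i\<^esub> \<le> K1" "\<forall>i. \<parallel>y i\<parallel>\<^bsub>i\<^esub> \<le> K2"
    using Bdd_bound assms(2,3) by metis
  with assms(4) have "\<And>i. \<parallel>w i\<parallel>\<^bsub>i\<^esub> \<le> K1 + K2"
    by (meson add_mono order.trans)
  with assms(1) show ?thesis by (rule BddI)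
qed

lemma pw_zero_Bdd[simp]: "pw_zero \<in> Bdd"
  unfolding pw_zero_def by (rule BddI[of _ 0]) simp_all
lemma pw_add_Bdd[simp]: "x \<in> Bdd \<Longrightarrow> y \<in> Bdd \<Longrightarrow> pw_add x y \<in> Bdd"
  unfolding pw_add_def by (rule Bdd_dominated[of _ x y]) (auto simp: Bdd_carrier norm_triangle)
lemma pw_neg_Bdd[simp]: "x \<in> Bdd \<Longrightarrow> pw_neg x \<in> Bdd"
  unfolding pw_neg_def by (rule Bdd_dominated[of _ x pw_zero]) (auto simp: Bdd_carrier)
lemma pw_sub_Bdd[simp]: "x \<in> Bdd \<Longrightarrow> y \<in> Bdd \<Longrightarrow> pw_sub x y \<in> Bdd"
  unfolding pw_sub_def by (rule Bdd_dominated[of _ x y]) (auto simp: Bdd_carrier norm_sub_le)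
lemma pw_abs_Bdd[simp]: "x \<in> Bdd \<Longrightarrow> pw_abs x \<in> Bdd"
  unfolding pw_abs_def by (rule Bdd_dominated[of _ x pw_zero]) (auto simp: Bdd_carrier)
lemma pw_inf_Bdd[simp]: "x \<in> Bdd \<Longrightarrow> y \<in> Bdd \<Longrightarrow> pw_inf x y \<in> Bdd"
  unfolding pw_inf_def
  by (rule Bdd_dominated[of _ x y]) (auto simp: Bdd_carrier blat_banach_lattice.norm_inf_le[OF component_lattice])
lemma pw_sup_Bdd[simp]: "x \<in> Bdd \<Longrightarrow> y \<in> Bdd \<Longrightarrow> pw_sup x y \<in> Bdd"
  unfolding pw_sup_def
  by (rule Bdd_dominated[of _ x y]) (auto simp: Bdd_carrier blat_banach_lattice.norm_sup_le[OF component_lattice])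
lemma pw_scale_Bdd[simp]:
  assumes "x \<in> Bdd" shows "pw_scale c x \<in> Bdd"
proof -
  obtain K where "\<forall>i. \<parallel>x i\<parallel>\<^bsub>i\<^esub> \<le> K" using Bdd_bound assms by metis
  then show ?thesis
    unfolding pw_scale_def using assms Bdd_carrier
    by (intro BddI[of _ "\<bar>c\<bar> * K"]) (auto simp: norm_scale mult_left_mono)
qed

lemma Null_iff: "z \<in> Null \<longleftrightarrow> z \<in> Bdd \<and> ((\<lambda>i. \<parallel>z i\<parallel>\<^bsub>i\<^esub>) \<longlongrightarrow> 0) U"
  unfolding up_null_def by auto
lemma Null_Bdd: "z \<in> Null \<Longrightarrow> z \<in> Bdd"
  using Null_iff by blast
lemma Null_tendsto: "z \<in> Null \<Longrightarrow> ((\<lambda>i. \<parallel>z i\<parallel>\<^bsub>i\<^esub>) \<longlongrightarrow> 0) U"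
  using Null_iff by blast

lemma Null_dominated:
  assumes "\<And>i. w i \<in> bl_carrier (E i)" and "z \<in> Null" "z' \<in> Null"
    and "\<And>i. \<parallel>w i\<parallel>\<^bsub>i\<^esub> \<le> \<parallel>z i\<parallel>\<^bsub>i\<^esub> + \<parallel>z' i\<parallel>\<^bsub>i\<^esub>"
  shows "w \<in> Null"
proof -
  have "((\<lambda>i. \<parallel>z i\<parallel>\<^bsub>i\<^esub> + \<parallel>z' i\<parallel>\<^bsub>i\<^esub>) \<longlongrightarrow> 0) U"
    using tendsto_add[OF Null_tendsto[OF assms(2)] Null_tendsto[OF assms(3)]] by simp
  then have "((\<lambda>i. \<parallel>w i\<parallel>\<^bsub>i\<^esub>) \<longlongrightarrow> 0) U"
    by (rule tendsto_zero_by_abs_bound[rotated]) (use assms(1,4) in simp)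
  moreover have "w \<in> Bdd"
    by (rule Bdd_dominated[of _ z z']) (use assms Null_Bdd in auto)
  ultimately show ?thesis using Null_iff by blast
qed

lemma Null_zero: "pw_zero \<in> Null"
  using pw_zero_Bdd by (simp add: Null_iff pw_zero_def)
lemma Null_add: "z \<in> Null \<Longrightarrow> w \<in> Null \<Longrightarrow> pw_add z w \<in> Null"
  unfolding pw_add_def by (rule Null_dominated[of _ z w]) (auto simp: Null_Bdd Bdd_carrier norm_triangle)
lemma Null_neg: "z \<in> Null \<Longrightarrow> pw_neg z \<in> Null"
  unfolding pw_neg_def by (rule Null_dominated[of _ z pw_zero]) (auto simp: Null_zero Null_Bdd Bdd_carrier)
lemma Null_abs: "z \<in> Null \<Longrightarrow> pw_abs z \<in> Null"
  unfolding pw_abs_def by (rule Null_dominated[of _ z pw_zero]) (auto simp: Null_zero Null_Bdd Bdd_carrier)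
lemma Null_scale:
  assumes "z \<in> Null" shows "pw_scale c z \<in> Null"
proof -
  have "((\<lambda>i. \<bar>c\<bar> * \<parallel>z i\<parallel>\<^bsub>i\<^esub>) \<longlongrightarrow> \<bar>c\<bar> * 0) U"
    using assms Null_tendsto by (intro tendsto_mult) auto
  then show ?thesis
    using assms Null_Bdd Bdd_carrier pw_scale_Bdd[of z c] by (simp add: Null_iff pw_scale_def norm_scale)
qed

lemma asymp_eq_iff_Null: "x \<in> Bdd \<Longrightarrow> y \<in> Bdd \<Longrightarrow> asymp_eq x y \<longleftrightarrow> pw_sub x y \<in> Null"
  unfolding asymp_eq_def Null_iff using pw_sub_Bdd[of x y] by (auto simp: pw_sub_def)

lemma asymp_eq_refl: "x \<in> Bdd \<Longrightarrow> asymp_eq x x"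
  unfolding asymp_eq_def using Bdd_carrier by (simp add: sub_eq_add_neg)
lemma asymp_eq_sym:
  assumes "asymp_eq x y" shows "asymp_eq y x"
proof -
  have "x \<in> Bdd" "y \<in> Bdd" using assms unfolding asymp_eq_def by auto
  then have "(\<lambda>i. \<parallel>y i \<ominus>\<^bsub>i\<^esub> x i\<parallel>\<^bsub>i\<^esub>) = (\<lambda>i. \<parallel>x i \<ominus>\<^bsub>i\<^esub> y i\<parallel>\<^bsub>i\<^esub>)"
    by (intro ext norm_sub_commute) (simp_all add: Bdd_carrier)
  then show ?thesis using assms unfolding asymp_eq_def by simp
qed
lemma asymp_eq_trans:
  assumes "asymp_eq x y" "asymp_eq y z" shows "asymp_eq x z"
proof -
  have B: "x \<in> Bdd" "y \<in> Bdd" "z \<in> Bdd" using assms unfolding asymp_eq_def by auto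
  have "pw_sub x y \<in> Null" "pw_sub y z \<in> Null" using assms B asymp_eq_iff_Null by auto
  then have "pw_sub x z \<in> Null"
  proof (rule Null_dominated[rotated])
    fix i
    show "pw_sub x z i \<in> bl_carrier (E i)" using B Bdd_carrier by (simp add: pw_sub_def)
    show "\<parallel>pw_sub x z i\<parallel>\<^bsub>i\<^esub> \<le> \<parallel>pw_sub x y i\<parallel>\<^bsub>i\<^esub> + \<parallel>pw_sub y z i\<parallel>\<^bsub>i\<^esub>"
      unfolding pw_sub_def using norm_sub_triangle[OF Bdd_carrier[OF B(1)] Bdd_carrier[OF B(2)] Bdd_carrier[OF B(3)]] .
  qed
  then show ?thesis using B asymp_eq_iff_Null by blast
qed

lemma asymp_eq_add:
  assumes "asymp_eq x x'" "asymp_eq y y'" shows "asymp_eq (pw_add x y) (pw_add x' y')"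
proof -
  have B: "x \<in> Bdd" "x' \<in> Bdd" "y \<in> Bdd" "y' \<in> Bdd" using assms unfolding asymp_eq_def by auto
  have "pw_add (pw_sub x x') (pw_sub y y') \<in> Null"
    using assms B asymp_eq_iff_Null by (intro Null_add) auto
  moreover have "pw_add (pw_sub x x') (pw_sub y y') = pw_sub (pw_add x y) (pw_add x' y')"
    using B Bdd_carrier by (auto simp: pw_add_def pw_sub_def vector_algebra_simps)
  ultimately show ?thesis using B asymp_eq_iff_Null by simp
qed

lemma asymp_eq_scale:
  assumes "asymp_eq x x'" shows "asymp_eq (pw_scale c x) (pw_scale c x')"
proof -
  have B: "x \<in> Bdd" "x' \<in> Bdd" using assms unfolding asymp_eq_def by auto
  have "pw_scale c (pw_sub x x') \<in> Null"
    using assms B asymp_eq_iff_Null by (intro Null_scale) auto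
  moreover have "pw_scale c (pw_sub x x') = pw_sub (pw_scale c x) (pw_scale c x')"
    using B Bdd_carrier by (auto simp: pw_scale_def pw_sub_def sub_eq_add_neg scale_right_distrib scale_neg)
  ultimately show ?thesis using B asymp_eq_iff_Null by simp
qed

lemma mem_cls_iff_asymp_eq: "x \<in> Bdd \<Longrightarrow> y \<in> cls x \<longleftrightarrow> asymp_eq x y"
  unfolding up_class_def asymp_eq_def Null_iff using pw_sub_Bdd[of x y] by (auto simp: pw_sub_def)

lemma cls_eq_iff:
  assumes x: "x \<in> Bdd" and y: "y \<in> Bdd" shows "cls x = cls y \<longleftrightarrow> asymp_eq x y"
proof
  assume "cls x = cls y"
  then show "asymp_eq x y"
    using mem_cls_iff_asymp_eq[OF x, of y] mem_cls_iff_asymp_eq[OF y, of y] asymp_eq_refl[OF y] by simp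
next
  assume "asymp_eq x y"
  then have "asymp_eq x w \<longleftrightarrow> asymp_eq y w" for w
    using asymp_eq_sym asymp_eq_trans by blast
  then show "cls x = cls y"
    using mem_cls_iff_asymp_eq[OF x] mem_cls_iff_asymp_eq[OF y] by blast
qed

lemma asymp_eq_rep: "x \<in> Bdd \<Longrightarrow> asymp_eq x (up_rep (cls x))"
  unfolding up_rep_def by (rule someI2[of _ x]) (simp_all add: mem_cls_iff_asymp_eq asymp_eq_refl)
lemma rep_asymp_eq: "x \<in> Bdd \<Longrightarrow> asymp_eq (up_rep (cls x)) x"
  using asymp_eq_rep asymp_eq_sym by blast
lemma rep_Bdd: "x \<in> Bdd \<Longrightarrow> up_rep (cls x) \<in> Bdd"
  using asymp_eq_rep asymp_eq_def by blast

lemma carrier_UP: "bl_carrier UP = cls ` Bdd"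
  by (simp add: ultraproduct_def)

lemma carrier_UP_rep:
  assumes "X \<in> bl_carrier UP" shows "up_rep X \<in> Bdd" "cls (up_rep X) = X"
proof -
  obtain x where x: "x \<in> Bdd" "X = cls x" using assms by (auto simp: carrier_UP)
  then show "up_rep X \<in> Bdd" "cls (up_rep X) = X"
    using cls_eq_iff rep_Bdd rep_asymp_eq by auto
qed

lemma tendsto_norm_if_close:
  assumes x: "\<And>i. x i \<in> bl_carrier (E i)" and y: "\<And>i. y i \<in> bl_carrier (E i)"
    and close: "((\<lambda>i. \<parallel>x i \<ominus>\<^bsub>i\<^esub> y i\<parallel>\<^bsub>i\<^esub>) \<longlongrightarrow> 0) U"
    and lim: "((\<lambda>i. \<parallel>x i\<parallel>\<^bsub>i\<^esub>) \<longlongrightarrow> l) U"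
  shows "((\<lambda>i. \<parallel>y i\<parallel>\<^bsub>i\<^esub>) \<longlongrightarrow> l) U"
proof -
  have "((\<lambda>i. \<parallel>y i\<parallel>\<^bsub>i\<^esub> - \<parallel>x i\<parallel>\<^bsub>i\<^esub>) \<longlongrightarrow> 0) U"
  proof (rule tendsto_zero_by_abs_bound[OF _ close])
    fix i
    show "\<bar>\<parallel>y i\<parallel>\<^bsub>i\<^esub> - \<parallel>x i\<parallel>\<^bsub>i\<^esub>\<bar> \<le> \<parallel>x i \<ominus>\<^bsub>i\<^esub> y i\<parallel>\<^bsub>i\<^esub>"
      using abs_norm_diff_le_norm_sub[OF y x] norm_sub_commute[OF y x] by simp
  qed
  from tendsto_add[OF this lim] show ?thesis by simp
qed

lemma norm_cls_tendsto:
  assumes "x \<in> Bdd" shows "((\<lambda>i. \<parallel>x i\<parallel>\<^bsub>i\<^esub>) \<longlongrightarrow> bl_norm UP (cls x)) U"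
proof -
  obtain K where "\<forall>i. \<parallel>x i\<parallel>\<^bsub>i\<^esub> \<le> K" using Bdd_bound assms by blast
  then have "\<And>i. \<bar>\<parallel>x i\<parallel>\<^bsub>i\<^esub>\<bar> \<le> K" using assms Bdd_carrier by simp
  then obtain l where l: "((\<lambda>i. \<parallel>x i\<parallel>\<^bsub>i\<^esub>) \<longlongrightarrow> l) U"
    using ultrafilter_bounded_convergent[OF ultrafilter] by meson
  define y where "y = up_rep (cls x)"
  have "asymp_eq x y" unfolding y_def using asymp_eq_rep[OF assms] .
  then have "((\<lambda>i. \<parallel>y i\<parallel>\<^bsub>i\<^esub>) \<longlongrightarrow> l) U"
    unfolding asymp_eq_def using Bdd_carrier l by (auto intro: tendsto_norm_if_close)
  then have "bl_norm UP (cls x) = l"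
    using U_not_bot by (simp add: ultraproduct_def tendsto_Lim y_def)
  then show ?thesis using l by simp
qed

lemma add_cls:
  assumes "x \<in> Bdd" "y \<in> Bdd" shows "bl_add UP (cls x) (cls y) = cls (pw_add x y)"
proof -
  have "bl_add UP (cls x) (cls y) = cls (pw_add (up_rep (cls x)) (up_rep (cls y)))"
    by (simp add: ultraproduct_def pw_add_def)
  also have "\<dots> = cls (pw_add x y)"
    using assms by (simp add: cls_eq_iff rep_Bdd asymp_eq_add rep_asymp_eq)
  finally show ?thesis .
qed

lemma scale_cls:
  assumes "x \<in> Bdd" shows "bl_smult UP c (cls x) = cls (pw_scale c x)"
proof -
  have "bl_smult UP c (cls x) = cls (pw_scale c (up_rep (cls x)))"
    by (simp add: ultraproduct_def pw_scale_def)
  also have "\<dots> = cls (pw_scale c x)"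
    using assms by (simp add: cls_eq_iff rep_Bdd asymp_eq_scale rep_asymp_eq)
  finally show ?thesis .
qed
lemma neg_cls: "x \<in> Bdd \<Longrightarrow> bl_neg UP (cls x) = cls (pw_neg x)"
  unfolding bl_neg_def using scale_cls by (simp add: pw_scale_def pw_neg_def bl_neg_def)
lemma sub_cls: "x \<in> Bdd \<Longrightarrow> y \<in> Bdd \<Longrightarrow> bl_minus UP (cls x) (cls y) = cls (pw_sub x y)"
  by (simp add: bl_minus_def neg_cls add_cls) (simp add: pw_add_def pw_neg_def pw_sub_def bl_minus_def)
lemma zero_cls: "bl_zero UP = cls pw_zero"
  by (simp add: ultraproduct_def pw_zero_def)

text \<open>The order of the ultraproduct is defined on the chosen representatives with a null
  correction term; any other representatives admit such a term as well.\<close>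

lemma le_witness_transfer:
  assumes "asymp_eq x x'" "asymp_eq y y'" "z \<in> Null" "\<forall>i. x i \<oplus>\<^bsub>i\<^esub> z i \<preceq>\<^bsub>i\<^esub> y i"
  shows "\<exists>z'\<in>Null. \<forall>i. x' i \<oplus>\<^bsub>i\<^esub> z' i \<preceq>\<^bsub>i\<^esub> y' i"
proof
  have B: "x \<in> Bdd" "x' \<in> Bdd" "y \<in> Bdd" "y' \<in> Bdd" using assms(1,2) unfolding asymp_eq_def by auto
  let ?z = "pw_add (pw_sub x x') (pw_add z (pw_sub y' y))"
  have "pw_sub x x' \<in> Null" "pw_sub y' y \<in> Null"
    using assms(1) asymp_eq_sym[OF assms(2)] B asymp_eq_iff_Null by blast+
  then show "?z \<in> Null" using assms(3) by (intro Null_add)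
  show "\<forall>i. x' i \<oplus>\<^bsub>i\<^esub> ?z i \<preceq>\<^bsub>i\<^esub> y' i"
  proof
    fix i
    have c: "x i \<in> bl_carrier (E i)" "x' i \<in> bl_carrier (E i)" "y i \<in> bl_carrier (E i)"
      "y' i \<in> bl_carrier (E i)" "z i \<in> bl_carrier (E i)"
      using B assms(3) Null_Bdd Bdd_carrier by auto
    have "x i \<oplus>\<^bsub>i\<^esub> z i \<oplus>\<^bsub>i\<^esub> (y' i \<ominus>\<^bsub>i\<^esub> y i) \<preceq>\<^bsub>i\<^esub> y i \<oplus>\<^bsub>i\<^esub> (y' i \<ominus>\<^bsub>i\<^esub> y i)"
      using assms(4) c by (intro blat_banach_lattice.add_right_mono[OF component_lattice]) auto
    moreover have "x' i \<oplus>\<^bsub>i\<^esub> ?z i = x i \<oplus>\<^bsub>i\<^esub> z i \<oplus>\<^bsub>i\<^esub> (y' i \<ominus>\<^bsub>i\<^esub> y i)"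
      using c by (simp add: pw_add_def pw_sub_def add_sub_cancel add_assoc[symmetric])
    moreover have "y i \<oplus>\<^bsub>i\<^esub> (y' i \<ominus>\<^bsub>i\<^esub> y i) = y' i"
      using c by (simp add: add_sub_cancel)
    ultimately show "x' i \<oplus>\<^bsub>i\<^esub> ?z i \<preceq>\<^bsub>i\<^esub> y' i" by simp
  qed
qed

lemma le_cls_iff:
  assumes x: "x \<in> Bdd" and y: "y \<in> Bdd"
  shows "bl_le UP (cls x) (cls y) \<longleftrightarrow> (\<exists>z\<in>Null. \<forall>i. x i \<oplus>\<^bsub>i\<^esub> z i \<preceq>\<^bsub>i\<^esub> y i)"
proof
  assume "bl_le UP (cls x) (cls y)"
  then obtain z where "z \<in> Null" "\<forall>i. up_rep (cls x) i \<oplus>\<^bsub>i\<^esub> z i \<preceq>\<^bsub>i\<^esub> up_rep (cls y) i"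
    by (auto simp: ultraproduct_def)
  then show "\<exists>z\<in>Null. \<forall>i. x i \<oplus>\<^bsub>i\<^esub> z i \<preceq>\<^bsub>i\<^esub> y i"
    using le_witness_transfer[OF rep_asymp_eq[OF x] rep_asymp_eq[OF y]] by blast
next
  assume "\<exists>z\<in>Null. \<forall>i. x i \<oplus>\<^bsub>i\<^esub> z i \<preceq>\<^bsub>i\<^esub> y i"
  then obtain z where "z \<in> Null" "\<forall>i. up_rep (cls x) i \<oplus>\<^bsub>i\<^esub> z i \<preceq>\<^bsub>i\<^esub> up_rep (cls y) i"
    using le_witness_transfer[OF asymp_eq_rep[OF x] asymp_eq_rep[OF y]] by blast
  then show "bl_le UP (cls x) (cls y)" using x y by (auto simp: ultraproduct_def)
qed

lemma le_clsI:
  assumes "x \<in> Bdd" "y \<in> Bdd" "\<And>i. x i \<preceq>\<^bsub>i\<^esub> y i" shows "bl_le UP (cls x) (cls y)"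
proof -
  have "\<forall>i. x i \<oplus>\<^bsub>i\<^esub> pw_zero i \<preceq>\<^bsub>i\<^esub> y i" using assms Bdd_carrier by (simp add: pw_zero_def)
  then show ?thesis using le_cls_iff[OF assms(1,2)] Null_zero by blast
qed

lemma le_UP_carrier: "bl_le UP X Y \<Longrightarrow> X \<in> bl_carrier UP" "bl_le UP X Y \<Longrightarrow> Y \<in> bl_carrier UP"
  by (simp_all add: ultraproduct_def)

lemma le_UP_antisym:
  assumes "bl_le UP X Y" "bl_le UP Y X" shows "X = Y"
proof -
  define x y where "x = up_rep X" and "y = up_rep Y"
  have x: "x \<in> Bdd" "cls x = X" and y: "y \<in> Bdd" "cls y = Y"
    using carrier_UP_rep le_UP_carrier(1)[OF assms(1)] le_UP_carrier(1)[OF assms(2)]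
    unfolding x_def y_def by auto
  obtain z where z: "z \<in> Null" "\<forall>i. x i \<oplus>\<^bsub>i\<^esub> z i \<preceq>\<^bsub>i\<^esub> y i" using assms(1) le_cls_iff x y by auto
  obtain z' where z': "z' \<in> Null" "\<forall>i. y i \<oplus>\<^bsub>i\<^esub> z' i \<preceq>\<^bsub>i\<^esub> x i" using assms(2) le_cls_iff x y by auto
  have "pw_sub x y \<in> Null"
  proof (rule Null_dominated[of _ "pw_scale 2 z" z'])
    fix i
    show "\<parallel>pw_sub x y i\<parallel>\<^bsub>i\<^esub> \<le> \<parallel>pw_scale 2 z i\<parallel>\<^bsub>i\<^esub> + \<parallel>z' i\<parallel>\<^bsub>i\<^esub>"
      using blat_banach_lattice.norm_sub_le_of_mutual_le[OF component_lattice, of "x i" i "y i" "z i" "z' i"]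
        z z' x y Null_Bdd Bdd_carrier by (auto simp: pw_sub_def pw_scale_def norm_scale)
  qed (use x y z z' Null_scale Bdd_carrier in \<open>simp_all add: pw_sub_def\<close>)
  then show ?thesis using x y cls_eq_iff asymp_eq_iff_Null by auto
qed

lemma is_sup_cls:
  assumes x: "x \<in> Bdd" and y: "y \<in> Bdd"
  shows "bl_is_sup UP (cls x) (cls y) (cls (pw_sup x y))"
  unfolding bl_is_sup_def
proof (intro conjI allI impI)
  have cx: "\<And>i. x i \<in> bl_carrier (E i)" and cy: "\<And>i. y i \<in> bl_carrier (E i)"
    using x y Bdd_carrier by auto
  have s: "pw_sup x y \<in> Bdd" using x y by simp
  show "cls (pw_sup x y) \<in> bl_carrier UP" using s by (simp add: carrier_UP)
  show "bl_le UP (cls x) (cls (pw_sup x y))"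
    by (rule le_clsI[OF x s]) (simp add: pw_sup_def blat_banach_lattice.sup_ge1[OF component_lattice cx cy])
  show "bl_le UP (cls y) (cls (pw_sup x y))"
    by (rule le_clsI[OF y s]) (simp add: pw_sup_def blat_banach_lattice.sup_ge2[OF component_lattice cx cy])
  fix W assume W: "bl_le UP (cls x) W \<and> bl_le UP (cls y) W"
  define w where "w = up_rep W"
  have "W \<in> bl_carrier UP" using W le_UP_carrier(2) by blast
  then have w: "w \<in> Bdd" "cls w = W" using carrier_UP_rep unfolding w_def by simp_all
  have "bl_le UP (cls x) (cls w)" "bl_le UP (cls y) (cls w)" using W w(2) by simp_all
  then obtain z z' where z: "z \<in> Null" "\<forall>i. x i \<oplus>\<^bsub>i\<^esub> z i \<preceq>\<^bsub>i\<^esub> w i"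
    and z': "z' \<in> Null" "\<forall>i. y i \<oplus>\<^bsub>i\<^esub> z' i \<preceq>\<^bsub>i\<^esub> w i"
    unfolding le_cls_iff[OF x w(1)] le_cls_iff[OF y w(1)] by blast
  have cz: "\<And>i. z i \<in> bl_carrier (E i)" "\<And>i. z' i \<in> bl_carrier (E i)"
    using z(1) z'(1) Null_Bdd Bdd_carrier by auto
  let ?t = "pw_neg (pw_add (pw_abs z) (pw_abs z'))"
  have "\<forall>i. pw_sup x y i \<oplus>\<^bsub>i\<^esub> ?t i \<preceq>\<^bsub>i\<^esub> w i"
    unfolding pw_sup_def pw_neg_def pw_add_def pw_abs_def
  proof
    fix i
    show "x i \<curlyvee>\<^bsub>i\<^esub> y i \<oplus>\<^bsub>i\<^esub> bl_neg (E i) (bl_abs (E i) (z i) \<oplus>\<^bsub>i\<^esub> bl_abs (E i) (z' i)) \<preceq>\<^bsub>i\<^esub> w i"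
      using z(2) z'(2) by (intro blat_banach_lattice.sup_add_le_perturbed[OF component_lattice cx cy cz]) auto
  qed
  moreover have "?t \<in> Null" using z z' by (intro Null_neg Null_add Null_abs)
  ultimately have "bl_le UP (cls (pw_sup x y)) (cls w)" using le_cls_iff[OF s w(1)] by blast
  then show "bl_le UP (cls (pw_sup x y)) W" using w(2) by simp
qed

lemma is_inf_cls:
  assumes x: "x \<in> Bdd" and y: "y \<in> Bdd"
  shows "bl_is_inf UP (cls x) (cls y) (cls (pw_inf x y))"
  unfolding bl_is_inf_def
proof (intro conjI allI impI)
  have cx: "\<And>i. x i \<in> bl_carrier (E i)" and cy: "\<And>i. y i \<in> bl_carrier (E i)"
    using x y Bdd_carrier by auto
  have s: "pw_inf x y \<in> Bdd" using x y by simp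
  show "cls (pw_inf x y) \<in> bl_carrier UP" using s by (simp add: carrier_UP)
  show "bl_le UP (cls (pw_inf x y)) (cls x)"
    by (rule le_clsI[OF s x]) (simp add: pw_inf_def blat_banach_lattice.inf_le1[OF component_lattice cx cy])
  show "bl_le UP (cls (pw_inf x y)) (cls y)"
    by (rule le_clsI[OF s y]) (simp add: pw_inf_def blat_banach_lattice.inf_le2[OF component_lattice cx cy])
  fix W assume W: "bl_le UP W (cls x) \<and> bl_le UP W (cls y)"
  define w where "w = up_rep W"
  have "W \<in> bl_carrier UP" using W le_UP_carrier(1) by blast
  then have w: "w \<in> Bdd" "cls w = W" using carrier_UP_rep unfolding w_def by simp_all
  have cw: "\<And>i. w i \<in> bl_carrier (E i)" using w(1) Bdd_carrier by blast
  have "bl_le UP (cls w) (cls x)" "bl_le UP (cls w) (cls y)" using W w(2) by simp_all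
  then obtain z z' where z: "z \<in> Null" "\<forall>i. w i \<oplus>\<^bsub>i\<^esub> z i \<preceq>\<^bsub>i\<^esub> x i"
    and z': "z' \<in> Null" "\<forall>i. w i \<oplus>\<^bsub>i\<^esub> z' i \<preceq>\<^bsub>i\<^esub> y i"
    unfolding le_cls_iff[OF w(1) x] le_cls_iff[OF w(1) y] by blast
  have cz: "\<And>i. z i \<in> bl_carrier (E i)" "\<And>i. z' i \<in> bl_carrier (E i)"
    using z(1) z'(1) Null_Bdd Bdd_carrier by auto
  let ?t = "pw_neg (pw_add (pw_abs z) (pw_abs z'))"
  have "\<forall>i. w i \<oplus>\<^bsub>i\<^esub> ?t i \<preceq>\<^bsub>i\<^esub> pw_inf x y i"
    unfolding pw_inf_def pw_neg_def pw_add_def pw_abs_def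
  proof
    fix i
    show "w i \<oplus>\<^bsub>i\<^esub> bl_neg (E i) (bl_abs (E i) (z i) \<oplus>\<^bsub>i\<^esub> bl_abs (E i) (z' i)) \<preceq>\<^bsub>i\<^esub> x i \<curlywedge>\<^bsub>i\<^esub> y i"
      using z(2) z'(2) by (intro blat_banach_lattice.inf_ge_perturbed[OF component_lattice cw cz]) auto
  qed
  moreover have "?t \<in> Null" using z z' by (intro Null_neg Null_add Null_abs)
  ultimately have "bl_le UP (cls w) (cls (pw_inf x y))" using le_cls_iff[OF w(1) s] by blast
  then show "bl_le UP W (cls (pw_inf x y))" using w(2) by simp
qed

lemma sup_UP_eqI:
  assumes "bl_is_sup UP X Y Z" shows "bl_sup UP X Y = Z"
  unfolding bl_sup_def
proof (rule the_equality)
  show "bl_is_sup UP X Y Z" by (rule assms)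
  fix Z' assume Z': "bl_is_sup UP X Y Z'"
  have "bl_le UP Z' Z" "bl_le UP Z Z'" using Z' assms unfolding bl_is_sup_def by blast+
  then show "Z' = Z" by (rule le_UP_antisym)
qed

lemma inf_UP_eqI:
  assumes "bl_is_inf UP X Y Z" shows "bl_inf UP X Y = Z"
  unfolding bl_inf_def
proof (rule the_equality)
  show "bl_is_inf UP X Y Z" by (rule assms)
  fix Z' assume Z': "bl_is_inf UP X Y Z'"
  have "bl_le UP Z' Z" "bl_le UP Z Z'" using Z' assms unfolding bl_is_inf_def by blast+
  then show "Z' = Z" by (rule le_UP_antisym)
qed

lemma sup_cls: "x \<in> Bdd \<Longrightarrow> y \<in> Bdd \<Longrightarrow> bl_sup UP (cls x) (cls y) = cls (pw_sup x y)"
  by (rule sup_UP_eqI) (rule is_sup_cls)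

lemma inf_cls: "x \<in> Bdd \<Longrightarrow> y \<in> Bdd \<Longrightarrow> bl_inf UP (cls x) (cls y) = cls (pw_inf x y)"
  by (rule inf_UP_eqI) (rule is_inf_cls)

lemma labs_cls:
  assumes "x \<in> Bdd" shows "bl_abs UP (cls x) = cls (pw_abs x)"
proof -
  have "bl_abs UP (cls x) = bl_sup UP (cls x) (cls (pw_neg x))"
    using neg_cls[OF assms] by (simp add: bl_abs_def)
  also have "\<dots> = cls (pw_sup x (pw_neg x))" using sup_cls assms by simp
  finally show ?thesis by (simp add: pw_sup_def pw_neg_def pw_abs_def bl_abs_def)
qed

lemma disjoint_cls_tendsto:
  assumes x: "x \<in> Bdd" and y: "y \<in> Bdd" and disj: "bl_disjoint UP (cls x) (cls y)"
  shows "((\<lambda>i. \<parallel>bl_abs (E i) (x i) \<curlywedge>\<^bsub>i\<^esub> bl_abs (E i) (y i)\<parallel>\<^bsub>i\<^esub>) \<longlongrightarrow> 0) U"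
proof -
  let ?a = "pw_inf (pw_abs x) (pw_abs y)"
  have a: "?a \<in> Bdd" using x y by simp
  have "cls ?a = cls pw_zero"
    using disj labs_cls[OF x] labs_cls[OF y] inf_cls[OF pw_abs_Bdd[OF x] pw_abs_Bdd[OF y]]
    by (simp add: bl_disjoint_def zero_cls)
  then have "pw_sub ?a pw_zero \<in> Null"
    using cls_eq_iff[OF a pw_zero_Bdd] asymp_eq_iff_Null[OF a pw_zero_Bdd] by simp
  moreover have "pw_sub ?a pw_zero = ?a"
  proof
    fix i
    have "?a i \<in> bl_carrier (E i)" using Bdd_carrier[OF a] .
    then show "pw_sub ?a pw_zero i = ?a i" by (simp add: pw_sub_def pw_zero_def sub_eq_add_neg)
  qed
  ultimately have "?a \<in> Null" by simp
  then show ?thesis using Null_tendsto[of ?a] unfolding pw_inf_def pw_abs_def by simp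
qed


lemma mem_ultraproduct_sub: "X \<in> ultraproduct_sub E U M \<longleftrightarrow> (\<exists>x\<in>Bdd. (\<forall>i. x i \<in> M i) \<and> X = cls x)"
  unfolding ultraproduct_sub_def by auto

lemma cls_mem_ultraproduct_sub_approx:
  assumes CS: "\<And>i. closed_subspace (E i) (M i)" and p: "p \<in> Bdd" and m: "\<And>j i. m j i \<in> M i"
    and ev: "\<And>j. eventually (\<lambda>i. \<parallel>m j i \<ominus>\<^bsub>i\<^esub> p i\<parallel>\<^bsub>i\<^esub> < 1 / Suc j) U"
  shows "cls p \<in> ultraproduct_sub E U M"
proof -
  have "\<forall>i. \<exists>q. q \<in> M i \<and> \<parallel>q\<parallel>\<^bsub>i\<^esub> \<le> \<parallel>p i\<parallel>\<^bsub>i\<^esub> + 1 \<and>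
      (\<forall>j. (\<forall>l\<le>j. \<parallel>m l i \<ominus>\<^bsub>i\<^esub> p i\<parallel>\<^bsub>i\<^esub> < 1 / Suc l) \<longrightarrow> \<parallel>q \<ominus>\<^bsub>i\<^esub> p i\<parallel>\<^bsub>i\<^esub> \<le> 1 / Suc j)"
  proof
    fix i
    show "\<exists>q. q \<in> M i \<and> \<parallel>q\<parallel>\<^bsub>i\<^esub> \<le> \<parallel>p i\<parallel>\<^bsub>i\<^esub> + 1 \<and>
      (\<forall>j. (\<forall>l\<le>j. \<parallel>m l i \<ominus>\<^bsub>i\<^esub> p i\<parallel>\<^bsub>i\<^esub> < 1 / Suc l) \<longrightarrow> \<parallel>q \<ominus>\<^bsub>i\<^esub> p i\<parallel>\<^bsub>i\<^esub> \<le> 1 / Suc j)"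
      using blat_banach_lattice.closed_subspace_select_approx[OF component_lattice CS Bdd_carrier[OF p],
          where m = "\<lambda>j. m j i"] m by blast
  qed
  from choice[OF this] obtain q where q_props: "\<forall>i. q i \<in> M i \<and> \<parallel>q i\<parallel>\<^bsub>i\<^esub> \<le> \<parallel>p i\<parallel>\<^bsub>i\<^esub> + 1 \<and>
      (\<forall>j. (\<forall>l\<le>j. \<parallel>m l i \<ominus>\<^bsub>i\<^esub> p i\<parallel>\<^bsub>i\<^esub> < 1 / Suc l) \<longrightarrow> \<parallel>q i \<ominus>\<^bsub>i\<^esub> p i\<parallel>\<^bsub>i\<^esub> \<le> 1 / Suc j)"
    by blast
  then have qM: "\<And>i. q i \<in> M i" and q_bound: "\<And>i. \<parallel>q i\<parallel>\<^bsub>i\<^esub> \<le> \<parallel>p i\<parallel>\<^bsub>i\<^esub> + 1"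
    and q_close: "\<And>i j. (\<forall>l\<le>j. \<parallel>m l i \<ominus>\<^bsub>i\<^esub> p i\<parallel>\<^bsub>i\<^esub> < 1 / Suc l) \<Longrightarrow> \<parallel>q i \<ominus>\<^bsub>i\<^esub> p i\<parallel>\<^bsub>i\<^esub> \<le> 1 / Suc j"
    by blast+
  have q_carrier: "\<And>i. q i \<in> bl_carrier (E i)" using qM CS closed_subspace_subset by blast
  have q: "q \<in> Bdd"
  proof -
    obtain K where K: "\<forall>i. \<parallel>p i\<parallel>\<^bsub>i\<^esub> \<le> K" using Bdd_bound p by blast
    have "\<parallel>q i\<parallel>\<^bsub>i\<^esub> \<le> K + 1" for i using q_bound[of i] spec[OF K, of i] by linarith
    with q_carrier show ?thesis by (rule BddI)
  qed
  have "((\<lambda>i. \<parallel>q i \<ominus>\<^bsub>i\<^esub> p i\<parallel>\<^bsub>i\<^esub>) \<longlongrightarrow> 0) U"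
  proof (rule tendstoI)
    fix e :: real assume "e > 0"
    then obtain j :: nat where j: "1 / Suc j < e" by (metis nat_approx_posE)
    have "eventually (\<lambda>i. \<forall>l\<in>{..j}. \<parallel>m l i \<ominus>\<^bsub>i\<^esub> p i\<parallel>\<^bsub>i\<^esub> < 1 / Suc l) U"
      using ev by (intro eventually_ball_finite) auto
    then show "eventually (\<lambda>i. dist \<parallel>q i \<ominus>\<^bsub>i\<^esub> p i\<parallel>\<^bsub>i\<^esub> 0 < e) U"
    proof (rule eventually_mono)
      fix i assume "\<forall>l\<in>{..j}. \<parallel>m l i \<ominus>\<^bsub>i\<^esub> p i\<parallel>\<^bsub>i\<^esub> < 1 / Suc l"
      then have "\<parallel>q i \<ominus>\<^bsub>i\<^esub> p i\<parallel>\<^bsub>i\<^esub> \<le> 1 / Suc j" using q_close by simp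
      moreover have "0 \<le> \<parallel>q i \<ominus>\<^bsub>i\<^esub> p i\<parallel>\<^bsub>i\<^esub>" using q_carrier Bdd_carrier[OF p] by simp
      ultimately show "dist \<parallel>q i \<ominus>\<^bsub>i\<^esub> p i\<parallel>\<^bsub>i\<^esub> 0 < e" using j by (simp add: dist_real_def)
    qed
  qed
  then have "cls q = cls p" using q p by (simp add: cls_eq_iff asymp_eq_def)
  then show ?thesis using q qM unfolding mem_ultraproduct_sub by blast
qed

lemma ultraproduct_sub_closed_under_limits:
  assumes CS: "\<And>i. closed_subspace (E i) (M i)"
    and s: "\<And>k::nat. s k \<in> ultraproduct_sub E U M" and X: "X \<in> bl_carrier UP"
    and conv: "\<And>e. e > 0 \<Longrightarrow> \<exists>K. \<forall>k\<ge>K. bl_norm UP (bl_minus UP (s k) X) < e"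
  shows "X \<in> ultraproduct_sub E U M"
proof -
  define p where "p = up_rep X"
  have p: "p \<in> Bdd" "cls p = X" using carrier_UP_rep[OF X] unfolding p_def by auto
  have "\<forall>k. \<exists>x. x \<in> Bdd \<and> (\<forall>i. x i \<in> M i) \<and> s k = cls x"
    using s unfolding mem_ultraproduct_sub by blast
  from choice[OF this] obtain m where "\<forall>k. m k \<in> Bdd \<and> (\<forall>i. m k i \<in> M i) \<and> s k = cls (m k)"
    by blast
  then have m: "\<And>k. m k \<in> Bdd" "\<And>k i. m k i \<in> M i" "\<And>k. s k = cls (m k)" by blast+
  have "\<forall>j. \<exists>k. bl_norm UP (bl_minus UP (s k) X) < 1 / Suc j"
  proof
    fix j :: nat
    obtain k0 where "\<forall>k\<ge>k0. bl_norm UP (bl_minus UP (s k) X) < 1 / Suc j"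
      using conv[of "1 / Suc j"] by auto
    then show "\<exists>k. bl_norm UP (bl_minus UP (s k) X) < 1 / Suc j" by blast
  qed
  from choice[OF this] obtain K where K: "\<And>j. bl_norm UP (bl_minus UP (s (K j)) X) < 1 / Suc j"
    by blast
  have "eventually (\<lambda>i. \<parallel>m (K j) i \<ominus>\<^bsub>i\<^esub> p i\<parallel>\<^bsub>i\<^esub> < 1 / Suc j) U" for j
  proof -
    have "bl_norm UP (cls (pw_sub (m (K j)) p)) < 1 / Suc j"
      using K[of j] by (simp add: m(3) p(2)[symmetric] sub_cls[OF m(1) p(1)])
    from order_tendstoD(2)[OF norm_cls_tendsto[OF pw_sub_Bdd[OF m(1) p(1)]] this]
    show ?thesis by (simp add: pw_sub_def)
  qed
  then show ?thesis
    using cls_mem_ultraproduct_sub_approx[OF CS p(1), of "\<lambda>j. m (K j)"] m(2) p(2) by blast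
qed


lemma closed_subspace_ultraproduct_sub:
  assumes CS: "\<And>i. closed_subspace (E i) (M i)"
  shows "closed_subspace UP (ultraproduct_sub E U M)"
  unfolding closed_subspace_def
proof (intro conjI ballI allI impI)
  let ?S = "ultraproduct_sub E U M"
  show "?S \<subseteq> bl_carrier UP" by (auto simp: mem_ultraproduct_sub carrier_UP)
  have "\<forall>i. pw_zero i \<in> M i" using closed_subspace_zero[OF CS] by (simp add: pw_zero_def)
  then show "bl_zero UP \<in> ?S"
    unfolding mem_ultraproduct_sub zero_cls using pw_zero_Bdd by blast
  fix X Y assume "X \<in> ?S" "Y \<in> ?S"
  then obtain x y where x: "x \<in> Bdd" "\<forall>i. x i \<in> M i" "X = cls x"
    and y: "y \<in> Bdd" "\<forall>i. y i \<in> M i" "Y = cls y"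
    unfolding mem_ultraproduct_sub by blast
  have "\<forall>i. pw_add x y i \<in> M i" using x y closed_subspace_add[OF CS] by (simp add: pw_add_def)
  then show "bl_add UP X Y \<in> ?S"
    unfolding mem_ultraproduct_sub using x y add_cls pw_add_Bdd by blast
next
  fix c X assume "X \<in> ultraproduct_sub E U M"
  then obtain x where x: "x \<in> Bdd" "\<forall>i. x i \<in> M i" "X = cls x"
    unfolding mem_ultraproduct_sub by blast
  have "\<forall>i. pw_scale c x i \<in> M i" using x closed_subspace_scale[OF CS] by (simp add: pw_scale_def)
  then show "bl_smult UP c X \<in> ultraproduct_sub E U M"
    unfolding mem_ultraproduct_sub using x scale_cls pw_scale_Bdd by blast
next
  fix s X
  assume "(\<forall>k::nat. s k \<in> ultraproduct_sub E U M) \<and> X \<in> bl_carrier UP \<and>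
    (\<forall>e>0. \<exists>K. \<forall>k\<ge>K. bl_norm UP (bl_minus UP (s k) X) < e)"
  then show "X \<in> ultraproduct_sub E U M"
    using ultraproduct_sub_closed_under_limits[OF CS, of s X] by blast
qed

lemma dist_ultraproduct_sub_ge:
  assumes CS: "\<And>i. closed_subspace (E i) (M i)" and x: "x \<in> Bdd"
    and z: "\<And>i. z i \<in> bl_carrier (E i)"
    and close: "((\<lambda>i. \<parallel>x i \<ominus>\<^bsub>i\<^esub> z i\<parallel>\<^bsub>i\<^esub>) \<longlongrightarrow> 0) U"
    and far: "eventually (\<lambda>i. r \<le> bl_dist (E i) (z i) (M i)) U"
  shows "r \<le> bl_dist UP (cls x) (ultraproduct_sub E U M)"
  unfolding bl_dist_def
proof (rule cInf_greatest)
  show "(\<lambda>W. bl_norm UP (bl_minus UP (cls x) W)) ` ultraproduct_sub E U M \<noteq> {}"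
    using closed_subspace_zero[OF closed_subspace_ultraproduct_sub[OF CS]] by blast
  fix d assume "d \<in> (\<lambda>W. bl_norm UP (bl_minus UP (cls x) W)) ` ultraproduct_sub E U M"
  then obtain W where W: "W \<in> ultraproduct_sub E U M" and d: "d = bl_norm UP (bl_minus UP (cls x) W)"
    by blast
  obtain w where w: "w \<in> Bdd" "\<And>i. w i \<in> M i" "W = cls w"
    using W unfolding mem_ultraproduct_sub by blast
  have lim: "((\<lambda>i. \<parallel>x i \<ominus>\<^bsub>i\<^esub> w i\<parallel>\<^bsub>i\<^esub> + \<parallel>x i \<ominus>\<^bsub>i\<^esub> z i\<parallel>\<^bsub>i\<^esub>) \<longlongrightarrow> d + 0) U"
    using norm_cls_tendsto[OF pw_sub_Bdd[OF x w(1)]] close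
    by (intro tendsto_add) (simp_all add: d w(3) sub_cls[OF x w(1)] pw_sub_def)
  have "eventually (\<lambda>i. r \<le> \<parallel>x i \<ominus>\<^bsub>i\<^esub> w i\<parallel>\<^bsub>i\<^esub> + \<parallel>x i \<ominus>\<^bsub>i\<^esub> z i\<parallel>\<^bsub>i\<^esub>) U"
    using far
  proof (rule eventually_mono)
    fix i assume "r \<le> bl_dist (E i) (z i) (M i)"
    also have "\<dots> \<le> \<parallel>z i \<ominus>\<^bsub>i\<^esub> w i\<parallel>\<^bsub>i\<^esub>"
      using blat_banach_lattice.dist_le_norm_sub[OF component_lattice closed_subspace_subset[OF CS] w(2) z] .
    also have "\<dots> \<le> \<parallel>x i \<ominus>\<^bsub>i\<^esub> w i\<parallel>\<^bsub>i\<^esub> + \<parallel>x i \<ominus>\<^bsub>i\<^esub> z i\<parallel>\<^bsub>i\<^esub>"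
      using norm_sub_triangle[OF z[of i] Bdd_carrier[OF x, of i] Bdd_carrier[OF w(1), of i]]
        norm_sub_commute[OF z[of i] Bdd_carrier[OF x, of i]] by linarith
    finally show "r \<le> \<parallel>x i \<ominus>\<^bsub>i\<^esub> w i\<parallel>\<^bsub>i\<^esub> + \<parallel>x i \<ominus>\<^bsub>i\<^esub> z i\<parallel>\<^bsub>i\<^esub>" .
  qed
  then show "r \<le> d" using tendsto_lowerbound[OF lim _ U_not_bot] by simp
qed

lemma disjointify_tendsto:
  fixes n k :: nat
  assumes x: "\<And>k. k < n \<Longrightarrow> x k \<in> Bdd"
    and disj: "\<And>k l. k < n \<Longrightarrow> l < n \<Longrightarrow> k \<noteq> l \<Longrightarrow> bl_disjoint UP (cls (x k)) (cls (x l))"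
    and k: "k < n"
  shows "((\<lambda>i. \<parallel>x k i \<ominus>\<^bsub>i\<^esub> blat_banach_lattice.disjointify (E i) (\<lambda>k. x k i) n k\<parallel>\<^bsub>i\<^esub>) \<longlongrightarrow> 0) U"
proof (rule tendsto_zero_by_abs_bound)
  let ?overlap = "\<lambda>l i. if l = k then 0 else \<parallel>bl_abs (E i) (x k i) \<curlywedge>\<^bsub>i\<^esub> bl_abs (E i) (x l i)\<parallel>\<^bsub>i\<^esub>"
  have "((\<lambda>i. ?overlap l i) \<longlongrightarrow> 0) U" if "l < n" for l
  proof (cases "l = k")
    case False
    then show ?thesis using disjoint_cls_tendsto[OF x[OF k] x[OF that] disj[OF k that]] by simp
  qed simp
  then show "((\<lambda>i. \<Sum>l<n. ?overlap l i) \<longlongrightarrow> 0) U" by (intro tendsto_null_sum) simp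
  fix i
  have xc: "x j i \<in> bl_carrier (E i)" if "j < n" for j using x[OF that] Bdd_carrier by blast
  show "\<bar>\<parallel>x k i \<ominus>\<^bsub>i\<^esub> blat_banach_lattice.disjointify (E i) (\<lambda>k. x k i) n k\<parallel>\<^bsub>i\<^esub>\<bar> \<le> (\<Sum>l<n. ?overlap l i)"
    using blat_banach_lattice.norm_sub_disjointify_le[OF component_lattice xc k]
      blat_banach_lattice.disjointify_closed[OF component_lattice xc k] xc[OF k]
    by simp
qed

lemma normalize_tendsto:
  assumes x: "\<And>i. x i \<in> bl_carrier (E i)" and y: "\<And>i. y i \<in> bl_carrier (E i)"
    and norm_x: "((\<lambda>i. \<parallel>x i\<parallel>\<^bsub>i\<^esub>) \<longlongrightarrow> 1) U"
    and close: "((\<lambda>i. \<parallel>x i \<ominus>\<^bsub>i\<^esub> y i\<parallel>\<^bsub>i\<^esub>) \<longlongrightarrow> 0) U"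
  shows "eventually (\<lambda>i. \<parallel>y i\<parallel>\<^bsub>i\<^esub> > 0) U"
    and "((\<lambda>i. \<parallel>x i \<ominus>\<^bsub>i\<^esub> (1 / \<parallel>y i\<parallel>\<^bsub>i\<^esub>) \<odot>\<^bsub>i\<^esub> y i\<parallel>\<^bsub>i\<^esub>) \<longlongrightarrow> 0) U"
proof -
  have norm_y: "((\<lambda>i. \<parallel>y i\<parallel>\<^bsub>i\<^esub>) \<longlongrightarrow> 1) U"
    using tendsto_norm_if_close[OF x y close norm_x] .
  then show pos: "eventually (\<lambda>i. \<parallel>y i\<parallel>\<^bsub>i\<^esub> > 0) U" by (rule order_tendstoD) simp
  have bound_lim: "((\<lambda>i. \<parallel>x i \<ominus>\<^bsub>i\<^esub> y i\<parallel>\<^bsub>i\<^esub> + \<bar>1 - \<parallel>y i\<parallel>\<^bsub>i\<^esub>\<bar>) \<longlongrightarrow> 0 + \<bar>1 - 1\<bar>) U"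
    using close norm_y by (intro tendsto_intros)
  show "((\<lambda>i. \<parallel>x i \<ominus>\<^bsub>i\<^esub> (1 / \<parallel>y i\<parallel>\<^bsub>i\<^esub>) \<odot>\<^bsub>i\<^esub> y i\<parallel>\<^bsub>i\<^esub>) \<longlongrightarrow> 0) U"
  proof (rule Lim_null_comparison)
    show "eventually (\<lambda>i. norm \<parallel>x i \<ominus>\<^bsub>i\<^esub> (1 / \<parallel>y i\<parallel>\<^bsub>i\<^esub>) \<odot>\<^bsub>i\<^esub> y i\<parallel>\<^bsub>i\<^esub> \<le>
        \<parallel>x i \<ominus>\<^bsub>i\<^esub> y i\<parallel>\<^bsub>i\<^esub> + \<bar>1 - \<parallel>y i\<parallel>\<^bsub>i\<^esub>\<bar>) U"
      using pos
    proof (rule eventually_mono)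
      fix i assume "\<parallel>y i\<parallel>\<^bsub>i\<^esub> > 0"
      then show "norm \<parallel>x i \<ominus>\<^bsub>i\<^esub> (1 / \<parallel>y i\<parallel>\<^bsub>i\<^esub>) \<odot>\<^bsub>i\<^esub> y i\<parallel>\<^bsub>i\<^esub> \<le>
          \<parallel>x i \<ominus>\<^bsub>i\<^esub> y i\<parallel>\<^bsub>i\<^esub> + \<bar>1 - \<parallel>y i\<parallel>\<^bsub>i\<^esub>\<bar>"
        using blat_banach_lattice.norm_sub_normalize_le[OF component_lattice x y] x y by simp
    qed
  qed (use bound_lim in simp)
qed

lemma disjoint_unit_approximants:
  fixes n :: nat
  assumes Xc: "\<forall>k<n. X k \<in> bl_carrier UP \<and> bl_norm UP (X k) = 1"
    and Xd: "\<forall>k<n. \<forall>l<n. k \<noteq> l \<longrightarrow> bl_disjoint UP (X k) (X l)"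
  obtains x z where "\<And>k. k < n \<Longrightarrow> x k \<in> Bdd \<and> cls (x k) = X k"
    and "\<And>k i. z k i \<in> bl_carrier (E i)"
    and "\<And>k. k < n \<Longrightarrow> ((\<lambda>i. \<parallel>x k i \<ominus>\<^bsub>i\<^esub> z k i\<parallel>\<^bsub>i\<^esub>) \<longlongrightarrow> 0) U"
    and "eventually (\<lambda>i. (\<forall>k<n. \<parallel>z k i\<parallel>\<^bsub>i\<^esub> = 1) \<and>
      (\<forall>k<n. \<forall>l<n. k \<noteq> l \<longrightarrow> bl_disjoint (E i) (z k i) (z l i))) U"
proof -
  define x where "x k = up_rep (X k)" for k
  have x: "x k \<in> Bdd" "cls (x k) = X k" if "k < n" for k
    using carrier_UP_rep Xc that unfolding x_def by auto
  have x_carrier: "x k i \<in> bl_carrier (E i)" if "k < n" for k i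
    using x[OF that] Bdd_carrier by blast
  define y where "y k i = blat_banach_lattice.disjointify (E i) (\<lambda>k. x k i) n k" for k i
  have y_carrier: "y k i \<in> bl_carrier (E i)" if "k < n" for k i
    unfolding y_def by (rule blat_banach_lattice.disjointify_closed[OF component_lattice x_carrier that])
  have y_disjoint: "bl_disjoint (E i) (y k i) (y l i)" if "k < n" "l < n" "k \<noteq> l" for k l i
    unfolding y_def by (rule blat_banach_lattice.disjointify_disjoint[OF component_lattice x_carrier that])
  have y_close: "((\<lambda>i. \<parallel>x k i \<ominus>\<^bsub>i\<^esub> y k i\<parallel>\<^bsub>i\<^esub>) \<longlongrightarrow> 0) U" if "k < n" for k
    unfolding y_def using x Xd that by (intro disjointify_tendsto) auto
  have norm_x: "((\<lambda>i. \<parallel>x k i\<parallel>\<^bsub>i\<^esub>) \<longlongrightarrow> 1) U" if "k < n" for k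
    using norm_cls_tendsto[OF x(1)[OF that]] x(2)[OF that] Xc that by simp
  have normalize: "eventually (\<lambda>i. \<parallel>y k i\<parallel>\<^bsub>i\<^esub> > 0) U"
      "((\<lambda>i. \<parallel>x k i \<ominus>\<^bsub>i\<^esub> (1 / \<parallel>y k i\<parallel>\<^bsub>i\<^esub>) \<odot>\<^bsub>i\<^esub> y k i\<parallel>\<^bsub>i\<^esub>) \<longlongrightarrow> 0) U" if "k < n" for k
    using normalize_tendsto[OF x_carrier[OF that] y_carrier[OF that] norm_x[OF that] y_close[OF that]]
    by blast+
  define z where "z k i = (if k < n then (1 / \<parallel>y k i\<parallel>\<^bsub>i\<^esub>) \<odot>\<^bsub>i\<^esub> y k i else \<zero>\<^bsub>i\<^esub>)" for k i
  have "z k i \<in> bl_carrier (E i)" for k i unfolding z_def using y_carrier by simp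
  moreover have "((\<lambda>i. \<parallel>x k i \<ominus>\<^bsub>i\<^esub> z k i\<parallel>\<^bsub>i\<^esub>) \<longlongrightarrow> 0) U" if "k < n" for k
    unfolding z_def using normalize(2)[OF that] that by simp
  moreover have "eventually (\<lambda>i. (\<forall>k<n. \<parallel>z k i\<parallel>\<^bsub>i\<^esub> = 1) \<and>
      (\<forall>k<n. \<forall>l<n. k \<noteq> l \<longrightarrow> bl_disjoint (E i) (z k i) (z l i))) U"
  proof (rule eventually_mono)
    show "eventually (\<lambda>i. \<forall>k\<in>{..<n}. \<parallel>y k i\<parallel>\<^bsub>i\<^esub> > 0) U"
      using normalize(1) by (intro eventually_ball_finite) auto
    fix i assume pos: "\<forall>k\<in>{..<n}. \<parallel>y k i\<parallel>\<^bsub>i\<^esub> > 0"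
    have "\<parallel>z k i\<parallel>\<^bsub>i\<^esub> = 1" if "k < n" for k
      using blat_banach_lattice.norm_normalize[OF component_lattice y_carrier[OF that]] pos that
      by (simp add: z_def)
    moreover have "bl_disjoint (E i) (z k i) (z l i)" if "k < n" "l < n" "k \<noteq> l" for k l
      using blat_banach_lattice.disjoint_scale[OF component_lattice y_carrier y_carrier y_disjoint]
        pos that by (simp add: z_def)
    ultimately show "(\<forall>k<n. \<parallel>z k i\<parallel>\<^bsub>i\<^esub> = 1) \<and>
        (\<forall>k<n. \<forall>l<n. k \<noteq> l \<longrightarrow> bl_disjoint (E i) (z k i) (z l i))" by blast
  qed
  ultimately show ?thesis using that x by blast
qed

lemma dispersed_ultraproduct_sub:
  assumes D: "\<And>i. dispersed n r (E i) (M i)"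
    and Xc: "\<forall>k<n. X k \<in> bl_carrier UP \<and> bl_norm UP (X k) = 1"
    and Xd: "\<forall>k<n. \<forall>l<n. k \<noteq> l \<longrightarrow> bl_disjoint UP (X k) (X l)"
  shows "\<exists>k<n. r \<le> bl_dist UP (X k) (ultraproduct_sub E U M)"
proof -
  have CS: "\<And>i. closed_subspace (E i) (M i)" using D unfolding dispersed_def by blast
  obtain x z where x: "\<And>k. k < n \<Longrightarrow> x k \<in> Bdd \<and> cls (x k) = X k"
    and z: "\<And>k i. z k i \<in> bl_carrier (E i)"
    and close: "\<And>k. k < n \<Longrightarrow> ((\<lambda>i. \<parallel>x k i \<ominus>\<^bsub>i\<^esub> z k i\<parallel>\<^bsub>i\<^esub>) \<longlongrightarrow> 0) U"
    and unit_disj: "eventually (\<lambda>i. (\<forall>k<n. \<parallel>z k i\<parallel>\<^bsub>i\<^esub> = 1) \<and>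
      (\<forall>k<n. \<forall>l<n. k \<noteq> l \<longrightarrow> bl_disjoint (E i) (z k i) (z l i))) U"
    using disjoint_unit_approximants[OF Xc Xd] by blast
  have "eventually (\<lambda>i. \<exists>k<n. r \<le> bl_dist (E i) (z k i) (M i)) U"
    using unit_disj
  proof (rule eventually_mono)
    fix i
    have "\<forall>w::nat \<Rightarrow> 'a. (\<forall>k<n. w k \<in> bl_carrier (E i) \<and> \<parallel>w k\<parallel>\<^bsub>i\<^esub> = 1) \<and>
        (\<forall>k<n. \<forall>l<n. k \<noteq> l \<longrightarrow> bl_disjoint (E i) (w k) (w l)) \<longrightarrow>
        (\<exists>k<n. r \<le> bl_dist (E i) (w k) (M i))"
      using D[of i] unfolding dispersed_def by blast
    then have "(\<forall>k<n. z k i \<in> bl_carrier (E i) \<and> \<parallel>z k i\<parallel>\<^bsub>i\<^esub> = 1) \<and>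
        (\<forall>k<n. \<forall>l<n. k \<noteq> l \<longrightarrow> bl_disjoint (E i) (z k i) (z l i)) \<longrightarrow>
        (\<exists>k<n. r \<le> bl_dist (E i) (z k i) (M i))"
      by (rule spec)
    then show "(\<forall>k<n. \<parallel>z k i\<parallel>\<^bsub>i\<^esub> = 1) \<and> (\<forall>k<n. \<forall>l<n. k \<noteq> l \<longrightarrow> bl_disjoint (E i) (z k i) (z l i)) \<Longrightarrow>
        \<exists>k<n. r \<le> bl_dist (E i) (z k i) (M i)"
      using z by blast
  qed
  from ultrafilter_ex_finite[OF ultrafilter this] obtain k
    where k: "k < n" and far: "eventually (\<lambda>i. r \<le> bl_dist (E i) (z k i) (M i)) U"
    by blast
  have "r \<le> bl_dist UP (cls (x k)) (ultraproduct_sub E U M)"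
    using x[OF k] z close[OF k] by (intro dist_ultraproduct_sub_ge[OF CS _ _ _ far]) auto
  then show ?thesis using x k by auto
qed

end

theorem proposition5p9:
  fixes E :: "'i \<Rightarrow> 'a blat" and M :: "'i \<Rightarrow> 'a set" and U :: "'i filter"
    and n :: nat and r :: real
  assumes "is_ultrafilter U" and "is_free_filter U" and "r > 0"
    and "\<forall>i. banach_lattice (E i)" and "\<forall>i. order_continuous (E i)"
    and "\<forall>i. has_weak_unit (E i)"
    and "\<forall>i. dispersed n r (E i) (M i)"
  shows "dispersed n r (ultraproduct E U) (ultraproduct_sub E U M)"
proof -
  interpret blat_ultraproduct E U
    using assms(1,4) by unfold_locales auto
  have "\<And>i. closed_subspace (E i) (M i)" using assms(7) unfolding dispersed_def by blast
  then show ?thesis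
    unfolding dispersed_def
    using closed_subspace_ultraproduct_sub dispersed_ultraproduct_sub assms(7) by blast
qed

end
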